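(* Let $F_X$ and $F_Y$ be continuous, strictly increasing cdfs on $\mathbb{R}$ with finite second moments. For $n\in\mathbb{N}$ let $X_1,\dots,X_n$ be a random sample from $F_X$ and $Y_1,\dots,Y_n$ a random sample from $F_Y$. Let $\gamma\in[0,1]$ and assume that $c_\gamma<a_\gamma$ whenever $B_0\cap(-\infty,F_X^{-1}(\gamma))\neq\emptyset$, and $b_\gamma<d_\gamma$ whenever $B_0\cap(F_X^{-1}(\gamma),\infty)\neq\emptyset$. Let $(\gamma_n)_{n\in\mathbb{N}}$ be a $[0,1]$-valued sequence with $|\gamma_n-\gamma|=O(1/n)$. Then for every sufficiently small $\epsilon>0$ there is a constant $C_{\epsilon,\gamma}\ge 0$, independent of $n$, such that for all $n$, $$\varepsilon_{\mathcal{W}_2}\big(F_{X_{1+[(n-1)\gamma_n]:n}},F_{Y_{1+[(n-1)\gamma_n]:n}}\big)\le C_{\epsilon,\gamma}\, z_{\epsilon,\gamma}^{\,n-1},$$ where $$z_{\epsilon,\gamma}=\begin{cases}\dfrac{1-F_X(d_\gamma)}{1-F_X(b_\gamma)-\epsilon}, & \gamma=0,\\[2mm] \max\Big\{\Big(\tfrac{F_X(c_\gamma)}{F_X(a_\gamma)-\epsilon}\Big)^{\gamma}\Big(\tfrac{1-F_X(c_\gamma)}{1-F_X(a_\gamma)+\epsilon}\Big)^{1-\gamma},\ \Big(\tfrac{F_X(d_\gamma)}{F_X(b_\gamma)+\epsilon}\Big)^{\gamma}\Big(\tfrac{1-F_X(d_\gamma)}{1-F_X(b_\gamma)-\epsilon}\Big)^{1-\gamma}\Big\},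 & 0<\gamma<1,\\[2mm] \dfrac{F_X(c_\gamma)}{F_X(a_\gamma)-\epsilon}, & \gamma=1,\end{cases}$$ and $0\le z_{\epsilon,\gamma}<1$. Consequently $X_{1+[(n-1)\gamma_n]:n}\le_{\textnormal{d-ast}}Y_{1+[(n-1)\gamma_n]:n}$ as $n\to\infty$.
   Context: For a cdf $F$, $F^{-1}(u)=\inf\{x\in\mathbb{R}:F(x)\ge u\}$ (left-continuous inverse). $\mathcal{W}_2(F,G)=\big(\int_0^1(F^{-1}(u)-G^{-1}(u))^2du\big)^{1/2}$. For cdfs $F,G$ with finite second moments, $\varepsilon_{\mathcal{W}_2}(F,G)=\mathcal{W}_2^{-2}(F,G)\int_{\{u\in(0,1):F^{-1}(u)>G^{-1}(u)\}}(F^{-1}(u)-G^{-1}(u))^2du$, with the convention $\varepsilon_{\mathcal{W}_2}(F,G)=0$ if $\mathcal{W}_2(F,G)=0$. For processes $\{X_t\},\{Y_t\}$ indexed by $T\subseteq\mathbb{R}$ unbounded above (here $T=\mathbb{N}$), $X_t\le_{\textnormal{d-ast}}Y_t$ as $t\to\infty$ means $\lim_{t\to\infty}\varepsilon_{\mathcal{W}_2}(F_{X_t},F_{Y_t})=0$. $B_0=\{x\in\mathbb{R}:F_X(x)<F_Y(x)\}$, $B_2=\{x:F_X(x)\neq F_Y(x)\}$. $c_\gamma=\sup(B_0\cap(-\infty,F_X^{-1}(\gamma)))$, $d_\gamma=\inf(B_0\cap(F_X^{-1}(\gamma),\infty))$, $a_\gamma=\sup(B_2\cap(-\infty,F_X^{-1}(\gamma)))$,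 $b_\gamma=\inf(B_2\cap(F_X^{-1}(\gamma),\infty))$, with $\sup\emptyset=-\infty$, $\inf\emptyset=+\infty$, $F_X(-\infty)=0$, $F_X(+\infty)=1$. $X_{k:n}$ denotes the $k$-th smallest of $X_1,\dots,X_n$; $[x]$ is the integer part of $x$. *)

theory Defs
  imports "HOL-Analysis.Analysis" "HOL-Library.Landau_Symbols"
begin

definition is_cdf :: "(real \<Rightarrow> real) \<Rightarrow> bool" where
  "is_cdf F \<longleftrightarrow> mono F \<and> (\<forall>x. continuous (at_right x) F)
      \<and> (F \<longlongrightarrow> 0) at_bot \<and> (F \<longlongrightarrow> 1) at_top"

definition finite_second_moment :: "(real \<Rightarrow> real) \<Rightarrow> bool" where
  "finite_second_moment F \<longleftrightarrow> integrable (interval_measure F) (\<lambda>x. x\<^sup>2)"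

definition qinv :: "(real \<Rightarrow> real) \<Rightarrow> real \<Rightarrow> real" where
  "qinv F u = Inf {x. u \<le> F x}"

text \<open>The same inverse valued in the extended reals (inf of the empty set is +infinity,
  inf of an unbounded-below set is -infinity), needed for u = 0 and u = 1.\<close>
definition qinv_e :: "(real \<Rightarrow> real) \<Rightarrow> real \<Rightarrow> ereal" where
  "qinv_e F u = Inf (ereal ` {x. u \<le> F x})"

definition Fe :: "(real \<Rightarrow> real) \<Rightarrow> ereal \<Rightarrow> real" where
  "Fe F x = (if x = -\<infinity> then 0 else if x = \<infinity> then 1 else F (real_of_ereal x))"

definition W2sq :: "(real \<Rightarrow> real) \<Rightarrow> (real \<Rightarrow> real) \<Rightarrow> real" where
  "W2sq F G = (LBINT u:{0<..<1}. (qinv F u - qinv G u)\<^sup>2)"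

definition W2 :: "(real \<Rightarrow> real) \<Rightarrow> (real \<Rightarrow> real) \<Rightarrow> real" where
  "W2 F G = sqrt (W2sq F G)"

definition eps_W2 :: "(real \<Rightarrow> real) \<Rightarrow> (real \<Rightarrow> real) \<Rightarrow> real" where
  "eps_W2 F G = (if W2 F G = 0 then 0 else
     (LBINT u:{u\<in>{0<..<1}. qinv F u > qinv G u}. (qinv F u - qinv G u)\<^sup>2) / (W2 F G)\<^sup>2)"

text \<open>Almost stochastic dominance as t \<rightarrow> \<infinity> (index set T = nat), via the cdfs of X_t, Y_t.\<close>
definition d_ast_le :: "(nat \<Rightarrow> real \<Rightarrow> real) \<Rightarrow> (nat \<Rightarrow> real \<Rightarrow> real) \<Rightarrow> bool" where
  "d_ast_le FX FY \<longleftrightarrow> ((\<lambda>t. eps_W2 (FX t) (FY t)) \<longlonglongrightarrow> 0)"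

definition kth_smallest :: "nat \<Rightarrow> nat \<Rightarrow> (nat \<Rightarrow> real) \<Rightarrow> real" where
  "kth_smallest n k x = sort (map x [0..<n]) ! (k - 1)"

definition sample_measure :: "(real \<Rightarrow> real) \<Rightarrow> nat \<Rightarrow> (nat \<Rightarrow> real) measure" where
  "sample_measure F n = PiM {..<n} (\<lambda>_. interval_measure F)"

definition os_cdf :: "(real \<Rightarrow> real) \<Rightarrow> nat \<Rightarrow> nat \<Rightarrow> real \<Rightarrow> real" where
  "os_cdf F n k t = measure (sample_measure F n)
      {x \<in> space (sample_measure F n). kth_smallest n k x \<le> t}"

definition B0 :: "(real \<Rightarrow> real) \<Rightarrow> (real \<Rightarrow> real) \<Rightarrow> real set" where
  "B0 FX FY = {x. FX x < FY x}"
definition B2 :: "(real \<Rightarrow> real) \<Rightarrow> (real \<Rightarrow> real) \<Rightarrow> real set" where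
  "B2 FX FY = {x. FX x \<noteq> FY x}"

definition c_pt :: "(real \<Rightarrow> real) \<Rightarrow> (real \<Rightarrow> real) \<Rightarrow> real \<Rightarrow> ereal" where
  "c_pt FX FY g = Sup {ereal x | x. x \<in> B0 FX FY \<and> ereal x < qinv_e FX g}"
definition d_pt :: "(real \<Rightarrow> real) \<Rightarrow> (real \<Rightarrow> real) \<Rightarrow> real \<Rightarrow> ereal" where
  "d_pt FX FY g = Inf {ereal x | x. x \<in> B0 FX FY \<and> qinv_e FX g < ereal x}"
definition a_pt :: "(real \<Rightarrow> real) \<Rightarrow> (real \<Rightarrow> real) \<Rightarrow> real \<Rightarrow> ereal" where
  "a_pt FX FY g = Sup {ereal x | x. x \<in> B2 FX FY \<and> ereal x < qinv_e FX g}"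
definition b_pt :: "(real \<Rightarrow> real) \<Rightarrow> (real \<Rightarrow> real) \<Rightarrow> real \<Rightarrow> ereal" where
  "b_pt FX FY g = Inf {ereal x | x. x \<in> B2 FX FY \<and> qinv_e FX g < ereal x}"

definition z_rate :: "(real \<Rightarrow> real) \<Rightarrow> (real \<Rightarrow> real) \<Rightarrow> real \<Rightarrow> real \<Rightarrow> real" where
  "z_rate FX FY g e =
    (let a = Fe FX (a_pt FX FY g); b = Fe FX (b_pt FX FY g);
         c = Fe FX (c_pt FX FY g); d = Fe FX (d_pt FX FY g) in
     if g = 0 then (1 - d) / (1 - b - e)
     else if g = 1 then c / (a - e)
     else max ((c / (a - e)) powr g * ((1 - c) / (1 - a + e)) powr (1 - g))
              ((d / (b + e)) powr g * ((1 - d) / (1 - b - e)) powr (1 - g)))"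

end

theory Submission
  imports Defs "HOL-Probability.Probability"
begin

text \<open>The order statistic X_{k:n} has cdf B(F_X), where B is the binomial tail whose
  derivative is the Beta(k, n - k + 1) density b. The substitution u = B(v) turns both
  integrals in eps_W2 into integrals of the squared quantile gap
  (F_X^{-1}(v) - F_Y^{-1}(v))^2 against b(v) dv. The positive part of the gap lives on
  (0, F_X(c)] and [F_X(d), 1), while the gap is nonzero on an interval just below F_X(a) and
  one just above F_X(b). With k - 1 within O(1) of \<gamma>(n - 1), b is monotone on those
  tails, and comparing b at F_X(c) (resp. F_X(d)) with b on the nearby interval costs the
  factor exp((n - 1)(l(F_X(c)) - l(F_X(a) - \<epsilon>))) with l(p) = \<gamma> ln p + (1 - \<gamma>) ln (1 - p), up to
  a constant. These factors are the two terms of z, so the numerator of eps_W2 is at most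
  C z^(n-1) times the denominator.\<close>

section \<open>Continuous strictly increasing distribution functions\<close>

locale strict_cdf =
  fixes F :: "real \<Rightarrow> real"
  assumes continuous_F: "continuous_on UNIV F" and strict_mono_F: "strict_mono F"
    and lim_at_bot: "(F \<longlongrightarrow> 0) at_bot" and lim_at_top: "(F \<longlongrightarrow> 1) at_top"
begin

lemma less_iff: "F x < F y \<longleftrightarrow> x < y"
  using strict_mono_F by (simp add: strict_mono_less)

lemma le_iff: "F x \<le> F y \<longleftrightarrow> x \<le> y"
  using strict_mono_F by (simp add: strict_mono_less_eq)

lemma gt_0: "0 < F x"
proof -
  have "0 \<le> F (x - 1)"
    using lim_at_bot by (rule tendsto_upperbound)
      (auto simp: eventually_at_bot_linorder le_iff intro!: exI[of _ "x - 1"])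
  with less_iff[of "x - 1" x] show ?thesis by simp
qed

lemma less_1: "F x < 1"
proof -
  have "F (x + 1) \<le> 1"
    using lim_at_top by (rule tendsto_lowerbound)
      (auto simp: eventually_at_top_linorder le_iff intro!: exI[of _ "x + 1"])
  with less_iff[of x "x + 1"] show ?thesis by simp
qed

lemma is_cdf: "is_cdf F"
  unfolding is_cdf_def
proof (intro conjI allI)
  show "mono F" using le_iff by (auto simp: mono_def)
  show "continuous (at_right x) F" for x
    using continuous_F by (meson UNIV_I continuous_on_eq_continuous_within continuous_within_subset
        subset_UNIV)
qed (use lim_at_bot lim_at_top in auto)

lemma qinv_eqI:
  assumes "F x = v"
  shows "qinv F v = x"
proof -
  have "{y. v \<le> F y} = {x..}" using assms le_iff by auto
  then show ?thesis by (simp add: qinv_def)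
qed

lemma F_qinv:
  assumes "0 < v" "v < 1"
  shows "F (qinv F v) = v"
proof -
  obtain a where a: "F a < v"
    using order_tendstoD(2)[OF lim_at_bot assms(1)] by (auto simp: eventually_at_bot_linorder)
  obtain b where b: "v < F b"
    using order_tendstoD(1)[OF lim_at_top assms(2)] by (auto simp: eventually_at_top_linorder)
  have "a \<le> b" using a b less_iff[of b a] by linarith
  then obtain x where "F x = v"
    using IVT[of F a v b] a b continuous_F
    by (meson UNIV_I continuous_on_eq_continuous_at less_imp_le open_UNIV)
  then show ?thesis using qinv_eqI[of x v] by simp
qed

lemma qinv_le_iff: "0 < v \<Longrightarrow> v < 1 \<Longrightarrow> qinv F v \<le> x \<longleftrightarrow> v \<le> F x"
  using F_qinv le_iff by metis

lemma qinv_less_iff: "0 < v \<Longrightarrow> v < 1 \<Longrightarrow> qinv F v < x \<longleftrightarrow> v < F x"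
  using F_qinv less_iff by metis

lemma borel_measurable_qinv: "qinv F \<in> borel_measurable (restrict_space borel {0<..<1})"
proof (rule borel_measurable_mono_on_fnc, rule mono_onI)
  fix v w :: real assume "v \<in> {0<..<1}" "w \<in> {0<..<1}" "v \<le> w"
  then show "qinv F v \<le> qinv F w" using qinv_le_iff F_qinv by auto
qed

text \<open>The quantile function transports the uniform distribution on (0,1) to the
  distribution of F, so a finite second moment makes the squared quantile integrable.\<close>
lemma integrable_qinv_sq:
  assumes "finite_second_moment F"
  shows "integrable lborel (\<lambda>v. indicator {0<..<1} v * (qinv F v)\<^sup>2)"
proof -
  let ?U = "restrict_space lborel {0<..<1::real}"
  interpret U: prob_space ?U by (rule prob_space_restrict_space) auto
  have Q: "qinv F \<in> measurable ?U borel"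
    using borel_measurable_qinv
    by (simp add: measurable_cong_sets[OF sets_restrict_space_cong[OF sets_lborel] refl])
  let ?D = "distr ?U borel (qinv F)"
  have nd: "\<And>x y. x \<le> y \<Longrightarrow> F x \<le> F y" and rc: "\<And>a. continuous (at_right a) F"
    using is_cdf by (auto simp: is_cdf_def mono_def)
  have "cdf ?D x = F x" for x
  proof -
    have "qinv F -` {..x} \<inter> space ?U = {0<..F x}"
      using qinv_le_iff less_1[of x] by (auto simp: space_restrict_space)
    then have "cdf ?D x = measure ?U {0<..F x}"
      unfolding cdf_def using Q by (simp add: measure_distr)
    also have "\<dots> = F x"
      using less_1[of x] gt_0[of x] by (subst measure_restrict_space) auto
    finally show ?thesis .
  qed
  then have "?D = interval_measure F"
    using cdf_unique[OF U.real_distribution_distr[OF Q]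
        real_distribution_interval_measure[OF nd rc lim_at_bot lim_at_top]]
      cdf_interval_measure[OF nd rc lim_at_bot] by (simp add: fun_eq_iff)
  then have "integrable ?D (\<lambda>x. x\<^sup>2)" using assms by (simp add: finite_second_moment_def)
  then have "integrable ?U (\<lambda>v. (qinv F v)\<^sup>2)" using integrable_distr_eq[OF Q, of "\<lambda>x. x\<^sup>2"] by simp
  then show ?thesis by (subst (asm) integrable_restrict_space) auto
qed

lemma Fe_less: "x < y \<Longrightarrow> Fe F x < Fe F y"
proof (cases x; cases y)
  fix r s assume "x < y" "x = ereal r" "y = ereal s"
  then show ?thesis by (simp add: Fe_def less_iff)
qed (auto simp: Fe_def gt_0 less_1)

lemma Fe_mono: "x \<le> y \<Longrightarrow> Fe F x \<le> Fe F y"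
  using Fe_less[of x y] by (cases "x = y") (auto simp: order_le_less)

lemma qinv_e_less_iff:
  assumes "g \<in> {0..1}"
  shows "ereal y < qinv_e F g \<longleftrightarrow> F y < g" and "qinv_e F g < ereal y \<longleftrightarrow> g < F y"
proof -
  consider "g = 0" | "g = 1" | "0 < g" "g < 1" using assms by fastforce
  then have "(ereal y < qinv_e F g \<longleftrightarrow> F y < g) \<and> (qinv_e F g < ereal y \<longleftrightarrow> g < F y)"
  proof cases
    case 1
    have "qinv_e F g = -\<infinity>"
      unfolding qinv_e_def 1
    proof (rule ereal_bot)
      fix B show "Inf (ereal ` {x. 0 \<le> F x}) \<le> ereal B"
        by (rule Inf_lower) (use gt_0[of B] in auto)
    qed
    then show ?thesis using 1 gt_0[of y] by simp
  next
    case 2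
    have "{x. g \<le> F x} = {}" using 2 less_1 by (auto simp: not_le)
    then have "qinv_e F g = \<infinity>" by (simp add: qinv_e_def top_ereal_def)
    then show ?thesis using 2 less_1[of y] by simp
  next
    case 3
    define q where "q = qinv F g"
    have Fq: "F q = g" using F_qinv[OF 3] by (simp add: q_def)
    have "{x. g \<le> F x} = {q..}" using Fq le_iff by auto
    moreover have "Inf (ereal ` {q..}) = ereal q"
      by (rule antisym) (auto intro: Inf_lower Inf_greatest)
    ultimately have "qinv_e F g = ereal q" by (simp add: qinv_e_def)
    then show ?thesis using Fq less_iff by auto
  qed
  then show "ereal y < qinv_e F g \<longleftrightarrow> F y < g" "qinv_e F g < ereal y \<longleftrightarrow> g < F y" by auto
qed

end

section \<open>Order statistics and the binomial tail\<close>

definition binomial_tail :: "nat \<Rightarrow> nat \<Rightarrow> real \<Rightarrow> real" where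
  "binomial_tail n k p = (\<Sum>i=k..n. real (n choose i) * p^i * (1 - p)^(n - i))"

definition beta_dens :: "nat \<Rightarrow> nat \<Rightarrow> real \<Rightarrow> real" where
  "beta_dens n k p = real n * real ((n - 1) choose (k - 1)) * p^(k - 1) * (1 - p)^(n - k)"

lemma has_real_derivative_binomial_term:
  "((\<lambda>p::real. c * p^k * (1 - p)^m) has_real_derivative
      c * (real k * p^(k - 1) * (1 - p)^m - p^k * (real m * (1 - p)^(m - 1)))) (at p)"
  by (rule derivative_eq_intros refl)+ (simp add: algebra_simps)

lemma binomial_tail_has_real_derivative:
  assumes "1 \<le> k" "k \<le> n"
  shows "(binomial_tail n k has_real_derivative beta_dens n k p) (at p)"
  using assms(2,1)
proof (induction k rule: inc_induct)
  case base
  have "binomial_tail n n = (\<lambda>p. p ^ n)" by (simp add: binomial_tail_def fun_eq_iff)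
  moreover have "beta_dens n n p = real n * p ^ (n - Suc 0)" by (simp add: beta_dens_def)
  ultimately show ?case using DERIV_pow[of n p UNIV] by simp
next
  case (step k)
  obtain k' where k: "k = Suc k'" using step(1,4) not0_implies_Suc by fastforce
  define e where "e = n - Suc (Suc k')"
  have n: "n = Suc (Suc (k' + e))" using step(2) k unfolding e_def by linarith
  have split: "binomial_tail n k =
      (\<lambda>p. real (n choose k) * p^k * (1 - p)^(n - k) + binomial_tail n (Suc k) p)"
    using step by (simp add: binomial_tail_def fun_eq_iff sum.atLeast_Suc_atMost)
  have head: "((\<lambda>p. real (n choose k) * p^k * (1 - p)^(n - k)) has_real_derivative
      real (n choose k) * (real k * p^(k - 1) * (1 - p)^(n - k)
        - p^k * (real (n - k) * (1 - p)^(n - k - 1)))) (at p)"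
    by (rule has_real_derivative_binomial_term)
  have choose1: "real (n choose k) * real k = real n * real ((n - 1) choose k')"
    using Suc_times_binomial_eq[of "Suc (k' + e)" k'] unfolding k n
    by (simp only: of_nat_mult[symmetric] diff_Suc_1)
  have choose2: "real (n choose k) * real (Suc e) = real n * real ((n - 1) choose k)"
  proof -
    have "n - k = Suc e" using n k by simp
    then show ?thesis using binomial_absorb_comp[of n k]
      by (simp only: of_nat_mult[symmetric]) (simp add: mult.commute)
  qed
  have regroup: "\<And>a b c d f g h i::real.
      a * (b * c * d - f * (g * h)) + i = (a * b) * c * d - (a * g) * f * h + i"
    by (simp add: algebra_simps)
  have idx: "n - k = Suc e" "k - 1 = k'" "n - k - 1 = e" "n - Suc k = e" "Suc k - 1 = k"
    using n k by simp_all
  have "real (n choose k) * (real k * p^(k - 1) * (1 - p)^(n - k)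
        - p^k * (real (n - k) * (1 - p)^(n - k - 1))) + beta_dens n (Suc k) p = beta_dens n k p"
    unfolding regroup idx choose1 choose2 beta_dens_def by simp
  then show ?case
    unfolding split using DERIV_add[OF head step.IH] step.prems by simp
qed

lemma beta_dens_pos: "1 \<le> k \<Longrightarrow> k \<le> n \<Longrightarrow> 0 < p \<Longrightarrow> p < 1 \<Longrightarrow> 0 < beta_dens n k p"
  by (simp add: beta_dens_def)

lemma beta_dens_nonneg: "0 \<le> p \<Longrightarrow> p \<le> 1 \<Longrightarrow> 0 \<le> beta_dens n k p"
  by (simp add: beta_dens_def)

lemma beta_dens_le:
  assumes "0 \<le> p" "p \<le> 1"
  shows "beta_dens n k p \<le> real n * real ((n - 1) choose (k - 1))"
proof -
  have "p^(k - 1) * (1 - p)^(n - k) \<le> 1" using assms by (intro mult_le_one power_le_one) auto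
  from mult_left_le[OF this, of "real n * real ((n - 1) choose (k - 1))"]
  show ?thesis unfolding beta_dens_def by (simp add: mult.assoc)
qed

lemma continuous_on_binomial_tail: "continuous_on A (binomial_tail n k)"
  unfolding binomial_tail_def by (intro continuous_intros)

lemma continuous_on_beta_dens: "continuous_on A (beta_dens n k)"
  unfolding beta_dens_def by (intro continuous_intros)

lemma binomial_tail_0: "1 \<le> k \<Longrightarrow> binomial_tail n k 0 = 0"
  by (simp add: binomial_tail_def)

lemma binomial_tail_1:
  assumes "k \<le> n"
  shows "binomial_tail n k 1 = 1"
proof -
  have "binomial_tail n k 1 = (\<Sum>i\<in>{k..n}. if i = n then 1 else 0)"
    unfolding binomial_tail_def by (rule sum.cong) auto
  then show ?thesis using assms by simp
qed

lemma binomial_tail_strict_mono: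
  assumes "1 \<le> k" "k \<le> n" "0 \<le> x" "x < y" "y \<le> 1"
  shows "binomial_tail n k x < binomial_tail n k y"
proof (rule DERIV_pos_imp_increasing_open[OF assms(4) _ continuous_on_binomial_tail])
  fix z assume "x < z" "z < y"
  then show "\<exists>d. (binomial_tail n k has_real_derivative d) (at z) \<and> 0 < d"
    using binomial_tail_has_real_derivative[OF assms(1,2)] beta_dens_pos[OF assms(1,2)] assms(3,5)
    by force
qed

lemma binomial_tail_between_0_1:
  assumes "1 \<le> k" "k \<le> n" "0 < p" "p < 1"
  shows "0 < binomial_tail n k p \<and> binomial_tail n k p < 1"
  using binomial_tail_strict_mono[OF assms(1,2), of 0 p] binomial_tail_strict_mono[OF assms(1,2), of p 1]
    assms by (simp add: binomial_tail_0 binomial_tail_1)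

lemma strict_cdf_binomial_tail:
  assumes "strict_cdf F" "1 \<le> k" "k \<le> n"
  shows "strict_cdf (\<lambda>x. binomial_tail n k (F x))"
proof -
  interpret strict_cdf F by fact
  show ?thesis
  proof
    show "continuous_on UNIV (\<lambda>x. binomial_tail n k (F x))"
      by (rule continuous_on_compose2[OF continuous_on_binomial_tail continuous_F]) auto
    show "strict_mono (\<lambda>x. binomial_tail n k (F x))"
      by (rule strict_monoI)
        (use binomial_tail_strict_mono[OF assms(2,3)] less_iff gt_0 less_1 in \<open>meson less_imp_le\<close>)
    have "isCont (binomial_tail n k) 0" "isCont (binomial_tail n k) 1"
      using continuous_on_binomial_tail[of UNIV n k] by (auto simp: continuous_on_eq_continuous_at)
    then show "((\<lambda>x. binomial_tail n k (F x)) \<longlongrightarrow> 0) at_bot"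
      "((\<lambda>x. binomial_tail n k (F x)) \<longlongrightarrow> 1) at_top"
      using isCont_tendsto_compose[OF _ lim_at_bot] isCont_tendsto_compose[OF _ lim_at_top]
        binomial_tail_0[OF assms(2)] binomial_tail_1[OF assms(3)] by metis+
  qed
qed

lemma sorted_nth_le_iff:
  assumes "sorted s" "1 \<le> k" "k \<le> length s"
  shows "s ! (k-1) \<le> (t::real) \<longleftrightarrow> k \<le> length (filter (\<lambda>y. y \<le> t) s)"
  using assms
proof (induction s arbitrary: k)
  case Nil then show ?case by simp
next
  case (Cons a s)
  have sa: "\<forall>y\<in>set s. a \<le> y" "sorted s" using Cons.prems by auto
  show ?case
  proof (cases "a \<le> t")
    case True
    show ?thesis
    proof (cases k)
      case 0 then show ?thesis using Cons by simp
    next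
      case (Suc k')
      show ?thesis
      proof (cases k')
        case 0 then show ?thesis using Suc True by simp
      next
        case (Suc k'')
        have "s ! (k' - 1) \<le> t \<longleftrightarrow> k' \<le> length (filter (\<lambda>y. y \<le> t) s)"
          using Cons.IH[OF sa(2), of k'] Cons.prems \<open>k = Suc k'\<close> Suc by simp
        then show ?thesis using \<open>k = Suc k'\<close> Suc True by simp
      qed
    qed
  next
    case False
    have "filter (\<lambda>y. y \<le> t) s = []" using sa False by (auto simp: filter_empty_conv)
    moreover have "a \<le> (a # s) ! (k-1)"
      using Cons.prems sa by (cases "k - 1") (auto)
    ultimately show ?thesis using False Cons.prems by auto
  qed
qed

lemma kth_smallest_le_iff:
  assumes "1 \<le> k" "k \<le> n"
  shows "kth_smallest n k x \<le> t \<longleftrightarrow> k \<le> card {i\<in>{..<n}. x i \<le> t}"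
proof -
  let ?xs = "map x [0..<n]"
  have "kth_smallest n k x \<le> t \<longleftrightarrow> k \<le> length (filter (\<lambda>y. y \<le> t) (sort ?xs))"
    unfolding kth_smallest_def using assms by (intro sorted_nth_le_iff) auto
  also have "length (filter (\<lambda>y. y \<le> t) (sort ?xs)) = length (filter (\<lambda>y. y \<le> t) ?xs)"
    by (metis mset_filter mset_sort size_mset)
  also have "\<dots> = card {i\<in>{..<n}. x i \<le> t}"
    unfolding length_filter_conv_card by (rule arg_cong[where f=card]) auto
  finally show ?thesis .
qed

lemma sum_subsets_card_ge:
  fixes g :: "nat \<Rightarrow> real"
  shows "(\<Sum>S\<in>{S. S \<subseteq> {..<n} \<and> k \<le> card S}. g (card S)) = (\<Sum>i=k..n. real (n choose i) * g i)"
proof -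
  let ?SS = "{S. S \<subseteq> {..<n} \<and> k \<le> card S}"
  have fin: "finite ?SS" by (rule finite_subset[of _ "Pow {..<n}"]) auto
  have "(\<Sum>S\<in>?SS. g (card S)) = (\<Sum>i\<in>{k..n}. \<Sum>S\<in>{S\<in>?SS. card S = i}. g (card S))"
    by (rule sum.group[symmetric, OF fin]) (auto dest: card_mono[of "{..<n}", simplified])
  also have "\<dots> = (\<Sum>i\<in>{k..n}. real (n choose i) * g i)"
  proof (rule sum.cong[OF refl])
    fix i assume "i \<in> {k..n}"
    then have "{S\<in>?SS. card S = i} = {S. S \<subseteq> {..<n} \<and> card S = i}" by auto
    then show "(\<Sum>S\<in>{S\<in>?SS. card S = i}. g (card S)) = real (n choose i) * g i"
      using n_subsets[of "{..<n}" i] by simp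
  qed
  finally show ?thesis .
qed

lemma prod_if_mem:
  assumes "S \<subseteq> {..<n}"
  shows "(\<Prod>i<n. if i \<in> S then a else b) = a ^ card S * b ^ (n - card S)"
proof -
  let ?f = "\<lambda>i. if i \<in> S then a else b"
  have "(\<Prod>i<n. ?f i) = (\<Prod>i\<in>{..<n} - S. ?f i) * (\<Prod>i\<in>S. ?f i)"
    by (rule prod.subset_diff) (use assms in auto)
  also have "\<dots> = b ^ card ({..<n} - S) * a ^ card S" by simp
  finally show ?thesis
    using assms by (simp add: card_Diff_subset finite_subset mult.commute)
qed

lemma kth_smallest_le_eq_Union:
  assumes "1 \<le> k" "k \<le> n"
  shows "{x \<in> PiE {..<n} (\<lambda>_. UNIV). kth_smallest n k x \<le> t} =
    (\<Union>S\<in>{S. S \<subseteq> {..<n} \<and> k \<le> card S}. PiE {..<n} (\<lambda>i. if i \<in> S then {..t} else {t<..}))"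
    (is "?E = (\<Union>S\<in>?SS. PiE {..<n} (?A S))")
proof (intro equalityI subsetI)
  fix x assume x: "x \<in> ?E"
  let ?S = "{i\<in>{..<n}. x i \<le> t}"
  have "?S \<in> ?SS" using x kth_smallest_le_iff[OF assms] by auto
  moreover have "x \<in> PiE {..<n} (?A ?S)" using x unfolding PiE_iff by simp
  ultimately show "x \<in> (\<Union>S\<in>?SS. PiE {..<n} (?A S))" by blast
next
  fix x assume "x \<in> (\<Union>S\<in>?SS. PiE {..<n} (?A S))"
  then obtain S where S: "S \<in> ?SS" "x \<in> PiE {..<n} (?A S)" by blast
  have "x i \<le> t \<longleftrightarrow> i \<in> S" if "i < n" for i
  proof -
    have "x i \<in> ?A S i" using S(2) that by (auto simp: PiE_iff)
    then show ?thesis by (cases "i \<in> S") auto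
  qed
  then have "{i\<in>{..<n}. x i \<le> t} = S" using S(1) by auto
  moreover have "x \<in> PiE {..<n} (\<lambda>_. UNIV)" using S(2) by (auto simp: PiE_iff)
  ultimately show "x \<in> ?E" using kth_smallest_le_iff[OF assms, of x t] S(1) by simp
qed

lemma disjoint_family_on_sign_boxes:
  fixes t :: real
  shows "disjoint_family_on (\<lambda>S. PiE {..<n} (\<lambda>i. if i \<in> S then {..t} else {t<..})) {S. S \<subseteq> {..<n}}"
proof (unfold disjoint_family_on_def, intro ballI impI equals0I)
  fix S T x assume "S \<in> {S. S \<subseteq> {..<n}}" "T \<in> {S. S \<subseteq> {..<n}}" "S \<noteq> T"
  then obtain i where i: "i < n" "i \<in> S \<longleftrightarrow> i \<notin> T" by auto
  assume "x \<in> PiE {..<n} (\<lambda>i. if i \<in> S then {..t} else {t<..}) \<inter>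
    PiE {..<n} (\<lambda>i. if i \<in> T then {..t} else {t<..})"
  then have "x i \<in> (if i \<in> S then {..t} else {t<..})" "x i \<in> (if i \<in> T then {..t} else {t<..})"
    using i(1) by (auto simp: PiE_iff)
  then show False using i(2) by (auto split: if_splits)
qed

lemma measure_sample_sign_box:
  fixes t :: real
  assumes "is_cdf F" "S \<subseteq> {..<n}"
  shows "measure (sample_measure F n) (PiE {..<n} (\<lambda>i. if i \<in> S then {..t} else {t<..}))
    = F t ^ card S * (1 - F t) ^ (n - card S)"
proof -
  let ?M = "interval_measure F"
  define A where "A = (\<lambda>i. if i \<in> S then {..t} else {t<..})"
  have nd: "\<And>x y. x \<le> y \<Longrightarrow> F x \<le> F y" and rc: "\<And>a. continuous (at_right a) F"
    and lim0: "(F \<longlongrightarrow> 0) at_bot" and lim1: "(F \<longlongrightarrow> 1) at_top"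
    using assms(1) by (auto simp: is_cdf_def mono_def)
  interpret M: real_distribution ?M by (rule real_distribution_interval_measure[OF nd rc lim0 lim1])
  interpret P: product_sigma_finite "\<lambda>_. ?M" by unfold_locales
  have measure_A: "measure ?M (A i) = (if i \<in> S then F t else 1 - F t)" for i
  proof -
    have "measure ?M {..t} = F t" by (rule measure_interval_measure_Iic[OF nd rc lim0])
    moreover have "measure ?M {t<..} = 1 - measure ?M {..t}"
      using M.prob_compl[of "{..t}"] by (simp add: Compl_eq_Diff_UNIV[symmetric] Compl_atMost)
    ultimately show ?thesis by (simp add: A_def)
  qed
  have "emeasure (sample_measure F n) (PiE {..<n} A) = (\<Prod>i<n. emeasure ?M (A i))"
    unfolding sample_measure_def by (rule P.emeasure_PiM) (auto simp: A_def)
  also have "\<dots> = ennreal (\<Prod>i<n. measure ?M (A i))"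
    by (simp add: M.emeasure_eq_measure prod_ennreal measure_nonneg)
  finally have "measure (sample_measure F n) (PiE {..<n} A) = (\<Prod>i<n. measure ?M (A i))"
    by (simp add: measure_def prod_nonneg measure_nonneg)
  then show ?thesis using assms(2) unfolding A_def[symmetric] by (simp add: measure_A prod_if_mem)
qed

lemma os_cdf_eq_binomial_tail:
  assumes "is_cdf F" "1 \<le> k" "k \<le> n"
  shows "os_cdf F n k t = binomial_tail n k (F t)"
proof -
  let ?P = "sample_measure F n"
  define A where "A = (\<lambda>S (i::nat). if i \<in> S then {..t} else {t<..})"
  define SS where "SS = {S. S \<subseteq> {..<n} \<and> k \<le> card S}"
  have nd: "\<And>x y. x \<le> y \<Longrightarrow> F x \<le> F y" and rc: "\<And>a. continuous (at_right a) F"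
    and lim0: "(F \<longlongrightarrow> 0) at_bot" and lim1: "(F \<longlongrightarrow> 1) at_top"
    using assms(1) by (auto simp: is_cdf_def mono_def)
  interpret P: prob_space ?P
    unfolding sample_measure_def
    by (intro prob_space_PiM real_distribution.axioms(1)
        real_distribution_interval_measure[OF nd rc lim0 lim1])
  have "os_cdf F n k t = measure ?P (\<Union>S\<in>SS. PiE {..<n} (A S))"
    using kth_smallest_le_eq_Union[OF assms(2,3), of t]
    by (simp add: os_cdf_def sample_measure_def space_PiM A_def SS_def)
  also have "\<dots> = (\<Sum>S\<in>SS. measure ?P (PiE {..<n} (A S)))"
  proof (rule measure_finite_Union)
    show "finite SS" unfolding SS_def by (rule finite_subset[of _ "Pow {..<n}"]) auto
    show "disjoint_family_on (\<lambda>S. PiE {..<n} (A S)) SS"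
      using disjoint_family_on_sign_boxes[of n t] unfolding A_def SS_def
      by (rule disjoint_family_on_mono[rotated]) auto
    show "(\<lambda>S. PiE {..<n} (A S)) ` SS \<subseteq> sets ?P"
      by (auto simp: A_def sample_measure_def intro!: sets_PiM_I_finite)
  qed (simp add: P.emeasure_eq_measure)
  also have "\<dots> = (\<Sum>S\<in>SS. F t ^ card S * (1 - F t) ^ (n - card S))"
    by (rule sum.cong[OF refl]) (simp add: SS_def A_def measure_sample_sign_box[OF assms(1)])
  also have "\<dots> = binomial_tail n k (F t)"
    using sum_subsets_card_ge[of "\<lambda>i. F t ^ i * (1 - F t) ^ (n - i)" n k]
    unfolding SS_def binomial_tail_def by (simp add: mult.assoc)
  finally show ?thesis .
qed

lemma (in strict_cdf) qinv_binomial_tail_comp: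
  assumes "1 \<le> k" "k \<le> n" "0 < v" "v < 1"
  shows "qinv (\<lambda>x. binomial_tail n k (F x)) (binomial_tail n k v) = qinv F v"
proof -
  interpret G: strict_cdf "\<lambda>x. binomial_tail n k (F x)"
    by (rule strict_cdf_binomial_tail[OF strict_cdf_axioms assms(1,2)])
  show ?thesis by (rule G.qinv_eqI) (simp add: F_qinv assms(3,4))
qed

section \<open>Wasserstein integrals of order statistics\<close>

lemma integral_substitution_01:
  fixes B b f :: "real \<Rightarrow> real"
  assumes deriv: "\<And>x. x \<in> {0..1} \<Longrightarrow> (B has_real_derivative b x) (at x)"
    and cont: "continuous_on {0..1} b" and b_nonneg: "\<And>x. x \<in> {0..1} \<Longrightarrow> 0 \<le> b x"
    and B0: "B 0 = 0" and B1: "B 1 = 1"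
    and f_meas: "f \<in> borel_measurable borel" and f_nonneg: "\<And>u. 0 \<le> f u"
    and int: "integrable lborel (\<lambda>v. f (B v) * b v * indicator {0..1} v)"
  shows "(LBINT u. f u * indicator {0..1} u) = (LBINT v. f (B v) * b v * indicator {0..1} v)"
proof -
  have nonneg_rhs: "0 \<le> f (B x) * b x * indicator {0..1} x" for x
    using f_nonneg b_nonneg by (auto simp: indicator_def)
  have nonneg_lhs: "0 \<le> f x * indicator {0..1} x" for x
    using f_nonneg by (auto simp: indicator_def)
  have "(\<integral>\<^sup>+x. f x * indicator {B 0..B 1} x \<partial>lborel) =
        (\<integral>\<^sup>+x. f (B x) * b x * indicator {0..1} x \<partial>lborel)"
    by (rule nn_integral_substitution[OF _ deriv cont b_nonneg])
      (use f_meas in \<open>auto simp: set_borel_measurable_def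
        intro!: borel_measurable_scaleR borel_measurable_indicator\<close>)
  also have "\<dots> = ennreal (LBINT v. f (B v) * b v * indicator {0..1} v)"
    by (rule nn_integral_eq_integral[OF int]) (simp add: nonneg_rhs)
  finally have lhs: "(\<integral>\<^sup>+x. f x * indicator {0..1} x \<partial>lborel) =
      ennreal (LBINT v. f (B v) * b v * indicator {0..1} v)"
    using B0 B1 by simp
  have int_lhs: "integrable lborel (\<lambda>u. f u * indicator {0..1} u)"
    by (rule integrableI_nn_integral_finite[OF _ _ lhs]) (use f_meas in \<open>simp_all add: nonneg_lhs\<close>)
  have "(\<integral>\<^sup>+x. f x * indicator {0..1} x \<partial>lborel) = (LBINT u. f u * indicator {0..1} u)"
    by (rule nn_integral_eq_integral[OF int_lhs]) (simp add: nonneg_lhs)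
  moreover have "0 \<le> (LBINT u. f u * indicator {0..1} u)"
    by (rule integral_nonneg_AE) (simp add: nonneg_lhs)
  moreover have "0 \<le> (LBINT v. f (B v) * b v * indicator {0..1} v)"
    by (rule integral_nonneg_AE) (simp add: nonneg_rhs)
  ultimately show ?thesis using lhs by simp
qed

lemma borel_measurable_indicator_01_times:
  fixes f :: "real \<Rightarrow> real"
  assumes "f \<in> borel_measurable (restrict_space borel {0<..<1})"
  shows "(\<lambda>v. indicator {0<..<1} v * f v) \<in> borel_measurable borel"
proof -
  have "(\<lambda>x. if x \<in> {0<..<1} then f x else 0) \<in> borel_measurable borel"
    using measurable_restrict_space_iff[of "{0<..<1::real}" borel 0 borel f] assms by simp
  also have "(\<lambda>x. if x \<in> {0<..<1} then f x else 0) = (\<lambda>v. indicator {0<..<1} v * f v)"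
    by (auto simp: indicator_def fun_eq_iff)
  finally show ?thesis .
qed

lemma integrable_indicator_subset:
  fixes f :: "real \<Rightarrow> real"
  assumes "integrable lborel (\<lambda>v. indicator B v * f v)" "A \<subseteq> B" "A \<in> sets borel"
  shows "integrable lborel (\<lambda>v. indicator A v * f v)"
proof -
  have "integrable lborel (\<lambda>x. indicator A x *\<^sub>R (indicator B x * f x))"
    by (rule integrable_mult_indicator) (use assms in auto)
  also have "(\<lambda>x. indicator A x *\<^sub>R (indicator B x * f x)) = (\<lambda>x. indicator A x * f x)"
    using assms(2) by (auto simp: indicator_def fun_eq_iff)
  finally show ?thesis .
qed

lemma integral_indicator_interval_pos:
  fixes f :: "real \<Rightarrow> real"
  assumes int: "integrable lborel (\<lambda>v. indicator {a..b} v * f v)"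
    and "a < b" and pos: "\<And>v. v \<in> {a..b} \<Longrightarrow> 0 < f v"
  shows "0 < (LBINT v. indicator {a..b} v * f v)"
proof (rule ccontr)
  have nonneg: "AE v in lborel. 0 \<le> indicator {a..b} v * f v"
    using pos by (intro AE_I2) (simp add: indicator_def less_imp_le)
  assume "\<not> ?thesis"
  then have "(LBINT v. indicator {a..b} v * f v) = 0"
    using integral_nonneg_AE[OF nonneg] by simp
  then have "AE v in lborel. indicator {a..b} v * f v = 0"
    using integral_nonneg_eq_0_iff_AE[OF int nonneg] by simp
  then have "AE v in lborel. v \<notin> {a..b}"
  proof (rule AE_mp, intro AE_I2 impI notI)
    fix v assume "indicator {a..b} v * f v = 0" "v \<in> {a..b}"
    then show False using pos[of v] by simp
  qed
  then have "{a..b} \<in> null_sets lborel" by (subst AE_iff_null_sets) auto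
  then show False using \<open>a < b\<close> by auto
qed

locale cdf_pair = X: strict_cdf FX + Y: strict_cdf FY for FX FY +
  assumes moment_X: "finite_second_moment FX" and moment_Y: "finite_second_moment FY"
begin

definition qgap :: "real \<Rightarrow> real" where
  "qgap v = qinv FX v - qinv FY v"

lemma borel_measurable_qgap: "qgap \<in> borel_measurable (restrict_space borel {0<..<1})"
  unfolding qgap_def by (intro borel_measurable_diff X.borel_measurable_qinv Y.borel_measurable_qinv)

lemma borel_measurable_comp_qgap_times:
  fixes \<phi> g :: "real \<Rightarrow> real"
  assumes "continuous_on UNIV \<phi>" "g \<in> borel_measurable borel"
  shows "(\<lambda>v. indicator {0<..<1} v * (\<phi> (qgap v) * g v)) \<in> borel_measurable borel"
proof -
  have "(\<lambda>v. \<phi> (qgap v)) \<in> borel_measurable (restrict_space borel {0<..<1})"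
    by (rule measurable_compose[OF borel_measurable_qgap borel_measurable_continuous_onI[OF assms(1)]])
  moreover have "g \<in> borel_measurable (restrict_space borel {0<..<1})"
    by (rule measurable_restrict_space1[OF assms(2)])
  ultimately show ?thesis
    by (intro borel_measurable_indicator_01_times borel_measurable_times)
qed

lemma integrable_qgap_sq: "integrable lborel (\<lambda>v. indicator {0<..<1} v * (qgap v)\<^sup>2)"
proof (rule Bochner_Integration.integrable_bound)
  show "integrable lborel (\<lambda>v. 2 * (indicator {0<..<1} v * (qinv FX v)\<^sup>2)
      + 2 * (indicator {0<..<1} v * (qinv FY v)\<^sup>2))"
    using X.integrable_qinv_sq[OF moment_X] Y.integrable_qinv_sq[OF moment_Y] by auto
  show "(\<lambda>v. indicator {0<..<1} v * (qgap v)\<^sup>2) \<in> borel_measurable lborel"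
    using borel_measurable_comp_qgap_times[of power2 "\<lambda>_. 1"]
    by (simp add: continuous_on_power continuous_on_id)
  show "AE v in lborel. norm (indicator {0<..<1} v * (qgap v)\<^sup>2) \<le>
      norm (2 * (indicator {0<..<1} v * (qinv FX v)\<^sup>2) + 2 * (indicator {0<..<1} v * (qinv FY v)\<^sup>2))"
  proof (rule AE_I2)
    fix v
    have "2 * (qinv FX v)\<^sup>2 + 2 * (qinv FY v)\<^sup>2 - (qgap v)\<^sup>2 = (qinv FX v + qinv FY v)\<^sup>2"
      by (simp add: qgap_def power2_eq_square algebra_simps)
    then have "(qgap v)\<^sup>2 \<le> 2 * (qinv FX v)\<^sup>2 + 2 * (qinv FY v)\<^sup>2"
      using zero_le_power2[of "qinv FX v + qinv FY v"] by linarith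
    then show "norm (indicator {0<..<1} v * (qgap v)\<^sup>2) \<le> norm (2 * (indicator {0<..<1} v * (qinv FX v)\<^sup>2)
        + 2 * (indicator {0<..<1} v * (qinv FY v)\<^sup>2))"
      by (auto simp: indicator_def)
  qed
qed

lemma integrable_comp_qgap_beta_dens:
  assumes \<phi>: "continuous_on UNIV \<phi>" "\<And>x. 0 \<le> \<phi> x" "\<And>x. \<phi> x \<le> x\<^sup>2"
  shows "integrable lborel (\<lambda>v. indicator {0<..<1} v * (\<phi> (qgap v) * beta_dens n k v))"
proof (rule Bochner_Integration.integrable_bound)
  let ?c = "real n * real ((n - 1) choose (k - 1))"
  show "integrable lborel (\<lambda>v. ?c * (indicator {0<..<1} v * (qgap v)\<^sup>2))"
    using integrable_qgap_sq by simp
  show "(\<lambda>v. indicator {0<..<1} v * (\<phi> (qgap v) * beta_dens n k v)) \<in> borel_measurable lborel"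
    using borel_measurable_comp_qgap_times[OF \<phi>(1)
        borel_measurable_continuous_onI[OF continuous_on_beta_dens]] by simp
  show "AE v in lborel. norm (indicator {0<..<1} v * (\<phi> (qgap v) * beta_dens n k v))
      \<le> norm (?c * (indicator {0<..<1} v * (qgap v)\<^sup>2))"
  proof (rule AE_I2)
    fix v
    show "norm (indicator {0<..<1} v * (\<phi> (qgap v) * beta_dens n k v))
      \<le> norm (?c * (indicator {0<..<1} v * (qgap v)\<^sup>2))"
    proof (cases "v \<in> {0<..<1}")
      case True
      then have "0 \<le> beta_dens n k v" "beta_dens n k v \<le> ?c"
        using beta_dens_nonneg[of v n k] beta_dens_le[of v n k] by auto
      then have "\<phi> (qgap v) * beta_dens n k v \<le> (qgap v)\<^sup>2 * ?c"
        using \<phi>(2,3)[of "qgap v"] by (intro mult_mono) auto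
      then show ?thesis
        using True \<phi>(2)[of "qgap v"] \<open>0 \<le> beta_dens n k v\<close> by (simp add: abs_mult mult.commute)
    qed simp
  qed
qed

text \<open>The change of variables u = binomial_tail n k v, under which the quantile
  functions of the order statistics become those of FX and FY.\<close>
lemma integral_qinv_os_cdf_gap:
  assumes k: "1 \<le> k" "k \<le> n"
    and \<phi>: "continuous_on UNIV \<phi>" "\<And>x. 0 \<le> \<phi> x" "\<And>x. \<phi> x \<le> x\<^sup>2"
  shows "(LBINT u. indicator {0<..<1} u * \<phi> (qinv (os_cdf FX n k) u - qinv (os_cdf FY n k) u))
    = (LBINT v. indicator {0<..<1} v * (\<phi> (qgap v) * beta_dens n k v))"
proof -
  let ?B = "binomial_tail n k"
  define GX where "GX x = ?B (FX x)" for x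
  define GY where "GY x = ?B (FY x)" for x
  have os: "os_cdf FX n k = GX" "os_cdf FY n k = GY"
    unfolding GX_def GY_def
    using os_cdf_eq_binomial_tail[OF X.is_cdf k] os_cdf_eq_binomial_tail[OF Y.is_cdf k] by auto
  interpret GX: strict_cdf GX
    unfolding GX_def by (rule strict_cdf_binomial_tail[OF X.strict_cdf_axioms k])
  interpret GY: strict_cdf GY
    unfolding GY_def by (rule strict_cdf_binomial_tail[OF Y.strict_cdf_axioms k])
  define f where "f u = indicator {0<..<1} u * \<phi> (qinv GX u - qinv GY u)" for u
  have "f \<in> borel_measurable borel"
    unfolding f_def
    by (rule borel_measurable_indicator_01_times, rule measurable_compose[OF _
          borel_measurable_continuous_onI[OF \<phi>(1)]])
      (intro borel_measurable_diff GX.borel_measurable_qinv GY.borel_measurable_qinv)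
  moreover have f_comp: "f (?B v) * beta_dens n k v * indicator {0..1} v
      = indicator {0<..<1} v * (\<phi> (qgap v) * beta_dens n k v)" for v
  proof (cases "0 < v \<and> v < 1")
    case True
    then show ?thesis
      using binomial_tail_between_0_1[OF k, of v] X.qinv_binomial_tail_comp[OF k, of v]
        Y.qinv_binomial_tail_comp[OF k, of v]
      by (simp add: f_def qgap_def GX_def[abs_def] GY_def[abs_def] indicator_def)
  next
    case False
    then have "v \<notin> {0..1} \<or> v = 0 \<or> v = 1" by auto
    then show ?thesis
      using binomial_tail_0[OF k(1)] binomial_tail_1[OF k(2)] by (auto simp: f_def indicator_def)
  qed
  moreover have "0 \<le> f u" for u using \<phi>(2) by (simp add: f_def)
  moreover have "integrable lborel (\<lambda>v. f (?B v) * beta_dens n k v * indicator {0..1} v)"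
    unfolding f_comp by (rule integrable_comp_qgap_beta_dens[OF \<phi>])
  ultimately have "(LBINT u. f u * indicator {0..1} u) =
      (LBINT v. f (?B v) * beta_dens n k v * indicator {0..1} v)"
    by (intro integral_substitution_01 binomial_tail_has_real_derivative[OF k]
        continuous_on_beta_dens beta_dens_nonneg binomial_tail_0[OF k(1)] binomial_tail_1[OF k(2)])
      auto
  then have "(LBINT u. f u * indicator {0..1} u) =
      (LBINT v. indicator {0<..<1} v * (\<phi> (qgap v) * beta_dens n k v))"
    unfolding f_comp .
  moreover have "(LBINT u. f u * indicator {0..1} u) =
      (LBINT u. indicator {0<..<1} u * \<phi> (qinv GX u - qinv GY u))"
    by (rule Bochner_Integration.integral_cong) (auto simp: f_def indicator_def)
  ultimately show ?thesis unfolding os by simp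
qed

definition W2sq_os :: "nat \<Rightarrow> nat \<Rightarrow> real" where
  "W2sq_os n k = (LBINT v. indicator {0<..<1} v * ((qgap v)\<^sup>2 * beta_dens n k v))"

definition excess_os :: "nat \<Rightarrow> nat \<Rightarrow> real" where
  "excess_os n k = (LBINT v. indicator {0<..<1} v * ((max (qgap v) 0)\<^sup>2 * beta_dens n k v))"

lemma W2sq_os_nonneg: "0 \<le> W2sq_os n k"
  unfolding W2sq_os_def by (rule integral_nonneg_AE) (auto simp: indicator_def beta_dens_nonneg)

lemma excess_os_nonneg: "0 \<le> excess_os n k"
  unfolding excess_os_def by (rule integral_nonneg_AE) (auto simp: indicator_def beta_dens_nonneg)

lemma excess_os_le_W2sq_os: "excess_os n k \<le> W2sq_os n k"
  unfolding excess_os_def W2sq_os_def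
proof (rule integral_mono)
  have "continuous_on UNIV (\<lambda>x::real. (max x 0)\<^sup>2)" by (intro continuous_intros)
  moreover have "(max x 0)\<^sup>2 \<le> x\<^sup>2" for x :: real by (cases "0 \<le> x") (auto simp: max_def)
  ultimately show "integrable lborel (\<lambda>v. indicator {0<..<1} v * ((max (qgap v) 0)\<^sup>2 * beta_dens n k v))"
    by (intro integrable_comp_qgap_beta_dens[of "\<lambda>x. (max x 0)\<^sup>2"]) auto
  show "integrable lborel (\<lambda>v. indicator {0<..<1} v * ((qgap v)\<^sup>2 * beta_dens n k v))"
    by (intro integrable_comp_qgap_beta_dens[of power2]) (auto intro: continuous_intros)
  fix v
  have "(max (qgap v) 0)\<^sup>2 \<le> (qgap v)\<^sup>2" by (cases "0 \<le> qgap v") (auto simp: max_def)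
  then show "indicator {0<..<1} v * ((max (qgap v) 0)\<^sup>2 * beta_dens n k v)
      \<le> indicator {0<..<1} v * ((qgap v)\<^sup>2 * beta_dens n k v)"
    by (auto simp: indicator_def beta_dens_nonneg intro: mult_right_mono)
qed

lemma eps_W2_os_cdf:
  assumes k: "1 \<le> k" "k \<le> n"
  shows "eps_W2 (os_cdf FX n k) (os_cdf FY n k) =
    (if W2sq_os n k = 0 then 0 else excess_os n k / W2sq_os n k)"
proof -
  let ?QX = "qinv (os_cdf FX n k)" and ?QY = "qinv (os_cdf FY n k)"
  have "W2sq (os_cdf FX n k) (os_cdf FY n k) = (LBINT u. indicator {0<..<1} u * (?QX u - ?QY u)\<^sup>2)"
    by (simp add: W2sq_def set_lebesgue_integral_def)
  also have "\<dots> = W2sq_os n k"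
    unfolding W2sq_os_def
    by (rule integral_qinv_os_cdf_gap[OF k, of power2]) (auto intro: continuous_intros)
  finally have W: "W2 (os_cdf FX n k) (os_cdf FY n k) = sqrt (W2sq_os n k)"
    by (simp add: W2_def)
  have "(LBINT u:{u \<in> {0<..<1}. ?QX u > ?QY u}. (?QX u - ?QY u)\<^sup>2)
      = (LBINT u. indicator {0<..<1} u * (max (?QX u - ?QY u) 0)\<^sup>2)"
    unfolding set_lebesgue_integral_def
    by (rule Bochner_Integration.integral_cong) (auto simp: indicator_def max_def)
  also have "\<dots> = excess_os n k"
    unfolding excess_os_def
  proof (rule integral_qinv_os_cdf_gap[OF k])
    show "continuous_on UNIV (\<lambda>x::real. (max x 0)\<^sup>2)" by (intro continuous_intros)
    show "(max x 0)\<^sup>2 \<le> x\<^sup>2" for x :: real by (cases "0 \<le> x") (auto simp: max_def)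
  qed simp
  finally show ?thesis
    unfolding eps_W2_def W using W2sq_os_nonneg[of n k] by simp
qed

lemma eps_W2_os_cdf_nonneg: "1 \<le> k \<Longrightarrow> k \<le> n \<Longrightarrow> 0 \<le> eps_W2 (os_cdf FX n k) (os_cdf FY n k)"
  using W2sq_os_nonneg excess_os_nonneg by (simp add: eps_W2_os_cdf)

end

section \<open>The binomial log-likelihood\<close>

definition log_lik :: "real \<Rightarrow> real \<Rightarrow> real" where
  "log_lik a p = a * ln p + (1 - a) * ln (1 - p)"

definition log_abs_sum :: "real \<Rightarrow> real" where
  "log_abs_sum p = \<bar>ln p\<bar> + \<bar>ln (1 - p)\<bar>"

lemma log_lik_has_real_derivative:
  assumes "0 < p" "p < 1"
  shows "(log_lik a has_real_derivative (a - p) / (p * (1 - p))) (at p)"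
proof -
  have "(log_lik a has_real_derivative a * (1 / p) + (1 - a) * (1 / (1 - p) * - 1)) (at p)"
    unfolding log_lik_def
    by (intro DERIV_add DERIV_cmult DERIV_ln_divide DERIV_chain2[OF DERIV_ln_divide]
        derivative_eq_intros) (use assms in auto)
  moreover have "a * (1 / p) + (1 - a) * (1 / (1 - p) * - 1) = (a - p) / (p * (1 - p))"
    using assms by (simp add: field_simps)
  ultimately show ?thesis by simp
qed

lemma continuous_on_log_lik: "0 < x \<Longrightarrow> y < 1 \<Longrightarrow> continuous_on {x..y} (log_lik a)"
  unfolding log_lik_def by (intro continuous_intros) auto

lemma log_lik_mono_below:
  assumes "0 < x" "x \<le> y" "y \<le> a" "y < 1"
  shows "log_lik a x \<le> log_lik a y"
proof (rule DERIV_nonneg_imp_increasing_open[OF assms(2) _ continuous_on_log_lik[OF assms(1,4)]])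
  fix p assume "x < p" "p < y"
  then show "\<exists>d. (log_lik a has_real_derivative d) (at p) \<and> 0 \<le> d"
    using log_lik_has_real_derivative[of p a] assms by (auto intro!: divide_nonneg_pos)
qed

lemma log_lik_strict_mono_below:
  assumes "0 < x" "x < y" "y \<le> a" "y < 1"
  shows "log_lik a x < log_lik a y"
proof (rule DERIV_pos_imp_increasing_open[OF assms(2) _ continuous_on_log_lik[OF assms(1,4)]])
  fix p assume "x < p" "p < y"
  then show "\<exists>d. (log_lik a has_real_derivative d) (at p) \<and> 0 < d"
    using log_lik_has_real_derivative[of p a] assms by (auto intro!: divide_pos_pos)
qed

lemma log_lik_antimono_above:
  assumes "0 < x" "x \<le> y" "a \<le> x" "y < 1"
  shows "log_lik a y \<le> log_lik a x"
proof (rule DERIV_nonpos_imp_decreasing_open[OF assms(2) _ continuous_on_log_lik[OF assms(1,4)]])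
  fix p assume "x < p" "p < y"
  then show "\<exists>d. (log_lik a has_real_derivative d) (at p) \<and> d \<le> 0"
    using log_lik_has_real_derivative[of p a] assms by (auto intro!: divide_nonpos_pos)
qed

lemma log_lik_strict_antimono_above:
  assumes "0 < x" "x < y" "a \<le> x" "y < 1"
  shows "log_lik a y < log_lik a x"
proof (rule DERIV_neg_imp_decreasing_open[OF assms(2) _ continuous_on_log_lik[OF assms(1,4)]])
  fix p assume "x < p" "p < y"
  then show "\<exists>d. (log_lik a has_real_derivative d) (at p) \<and> d < 0"
    using log_lik_has_real_derivative[of p a] assms by (auto intro!: divide_neg_pos)
qed

lemma power_mult_power_eq_exp_log_lik:
  assumes "0 < v" "v < 1" "0 < m" "j \<le> m"
  shows "v ^ j * (1 - v) ^ (m - j) = exp (real m * log_lik (real j / real m) v)"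
proof -
  have "real m * log_lik (real j / real m) v = real j * ln v + real (m - j) * ln (1 - v)"
    using assms by (simp add: log_lik_def field_simps of_nat_diff)
  also have "exp \<dots> = v ^ j * (1 - v) ^ (m - j)"
    unfolding exp_add using assms exp_of_nat_mult[of j "ln v"] exp_of_nat_mult[of "m - j" "ln (1 - v)"]
    by simp
  finally show ?thesis by simp
qed

text \<open>Both sides equal exp (m log_lik g p + (j - g m)(ln p - ln (1 - p))), and the
  second summand is bounded by K log_abs_sum p.\<close>
lemma power_mult_power_ratio_le:
  assumes v: "0 < v" "v < 1" and w: "0 < w" "w < 1" and m: "0 < m" "j \<le> m"
    and K: "\<bar>real j - g * real m\<bar> \<le> K"
  shows "v ^ j * (1 - v) ^ (m - j) \<le>
    exp (real m * (log_lik g v - log_lik g w) + K * (log_abs_sum v + log_abs_sum w)) *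
    (w ^ j * (1 - w) ^ (m - j))"
proof -
  define \<delta> where "\<delta> = real j - g * real m"
  have shift: "real m * log_lik (real j / real m) p = real m * log_lik g p + \<delta> * (ln p - ln (1 - p))" for p
    using m by (simp add: log_lik_def \<delta>_def field_simps)
  have bound: "\<bar>\<delta> * (ln p - ln (1 - p))\<bar> \<le> K * log_abs_sum p" for p
    unfolding abs_mult log_abs_sum_def
    using K abs_triangle_ineq4[of "ln p" "ln (1 - p)"] by (intro mult_mono) (auto simp: \<delta>_def)
  have "real m * log_lik g v + \<delta> * (ln v - ln (1 - v)) \<le>
      (real m * (log_lik g v - log_lik g w) + K * (log_abs_sum v + log_abs_sum w))
      + (real m * log_lik g w + \<delta> * (ln w - ln (1 - w)))"
    using bound[of v] bound[of w] by (simp add: algebra_simps abs_le_iff)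
  then show ?thesis
    unfolding power_mult_power_eq_exp_log_lik[OF v m] power_mult_power_eq_exp_log_lik[OF w m]
      shift exp_add[symmetric] by simp
qed

lemma log_abs_sum_le:
  assumes "0 < w0" "w0 \<le> w" "w \<le> w1" "w1 < 1"
  shows "log_abs_sum w \<le> log_abs_sum w0 + log_abs_sum w1"
proof -
  have "\<bar>ln w\<bar> \<le> \<bar>ln w0\<bar>" "\<bar>ln (1 - w)\<bar> \<le> \<bar>ln (1 - w1)\<bar>" using assms by (simp_all add: abs_if)
  then show ?thesis unfolding log_abs_sum_def
    using abs_ge_zero[of "ln (1 - w0)"] abs_ge_zero[of "ln w1"] by linarith
qed

lemma beta_dens_eq_exp_log_lik:
  assumes "1 \<le> k" "k \<le> n" "2 \<le> n" "0 < v" "v < 1"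
  shows "beta_dens n k v = real n * real ((n - 1) choose (k - 1))
    * exp (real (n - 1) * log_lik (real (k - 1) / real (n - 1)) v)"
  using power_mult_power_eq_exp_log_lik[of v "n - 1" "k - 1"] assms
  by (simp add: beta_dens_def mult.assoc)

text \<open>The mode of beta_dens n k is (k - 1)/(n - 1).\<close>
lemma beta_dens_mono_below_mode:
  assumes "1 \<le> k" "k \<le> n" "2 \<le> n" "0 < v" "v \<le> p" "p < 1"
    and "p * real (n - 1) \<le> real (k - 1)"
  shows "beta_dens n k v \<le> beta_dens n k p"
proof -
  have "p \<le> real (k - 1) / real (n - 1)" using assms by (simp add: le_divide_eq)
  then have "log_lik (real (k - 1) / real (n - 1)) v \<le> log_lik (real (k - 1) / real (n - 1)) p"
    using assms by (intro log_lik_mono_below) auto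
  then show ?thesis using assms by (simp add: beta_dens_eq_exp_log_lik mult_left_mono)
qed

lemma beta_dens_antimono_above_mode:
  assumes "1 \<le> k" "k \<le> n" "2 \<le> n" "0 < p" "p \<le> v" "v < 1"
    and "real (k - 1) \<le> p * real (n - 1)"
  shows "beta_dens n k v \<le> beta_dens n k p"
proof -
  have "real (k - 1) / real (n - 1) \<le> p" using assms by (simp add: divide_le_eq)
  then have "log_lik (real (k - 1) / real (n - 1)) v \<le> log_lik (real (k - 1) / real (n - 1)) p"
    using assms by (intro log_lik_antimono_above) auto
  then show ?thesis using assms by (simp add: beta_dens_eq_exp_log_lik mult_left_mono)
qed

lemma beta_dens_le_exp_log_lik_gap:
  assumes k: "1 \<le> k" "k \<le> n" "2 \<le> n" and p: "0 < p" "p < 1"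
    and w: "0 < w0" "w0 \<le> w" "w \<le> w1" "w1 < 1" "G0 \<le> log_lik g w"
    and K: "\<bar>real (k - 1) - g * real (n - 1)\<bar> \<le> K"
  shows "beta_dens n k p \<le> exp (log_lik g p - G0) ^ (n - 1)
    * exp (K * (log_abs_sum p + (log_abs_sum w0 + log_abs_sum w1))) * beta_dens n k w"
proof -
  let ?c = "real n * real ((n - 1) choose (k - 1))"
  have w01: "0 < w" "w < 1" using w by auto
  have "0 \<le> K" using K by linarith
  have "real (n - 1) * (log_lik g p - log_lik g w) + K * (log_abs_sum p + log_abs_sum w) \<le>
      real (n - 1) * (log_lik g p - G0) + K * (log_abs_sum p + (log_abs_sum w0 + log_abs_sum w1))"
    using w log_abs_sum_le[of w0 w w1] \<open>0 \<le> K\<close> by (intro add_mono mult_left_mono) auto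
  then have "exp (real (n - 1) * (log_lik g p - log_lik g w) + K * (log_abs_sum p + log_abs_sum w))
      \<le> exp (log_lik g p - G0) ^ (n - 1) * exp (K * (log_abs_sum p + (log_abs_sum w0 + log_abs_sum w1)))"
    unfolding exp_of_nat_mult[symmetric] exp_add[symmetric] by (rule exp_mono)
  moreover have "p ^ (k - 1) * (1 - p) ^ (n - k) \<le>
      exp (real (n - 1) * (log_lik g p - log_lik g w) + K * (log_abs_sum p + log_abs_sum w))
      * (w ^ (k - 1) * (1 - w) ^ (n - k))"
    using power_mult_power_ratio_le[OF p w01, of "n - 1" "k - 1" g K] k K
    by (simp add: Suc_diff_le)
  ultimately have ratio: "p ^ (k - 1) * (1 - p) ^ (n - k) \<le>
      exp (log_lik g p - G0) ^ (n - 1) * exp (K * (log_abs_sum p + (log_abs_sum w0 + log_abs_sum w1)))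
      * (w ^ (k - 1) * (1 - w) ^ (n - k))"
    using w01 by (meson order_trans mult_right_mono less_imp_le zero_le_mult_iff zero_le_power
        diff_ge_0_iff_ge)
  show ?thesis
    using mult_left_mono[OF ratio, of ?c] by (simp add: beta_dens_def algebra_simps)
qed

context cdf_pair
begin

lemma integrable_qgap_sq_beta_dens:
  assumes "A \<subseteq> {0<..<1}" "A \<in> sets borel"
  shows "integrable lborel (\<lambda>v. indicator A v * ((qgap v)\<^sup>2 * beta_dens n k v))"
  by (rule integrable_indicator_subset[OF _ assms],
      rule integrable_comp_qgap_beta_dens[of power2]) (auto intro: continuous_intros)

lemma integral_qgap_sq_beta_dens_le_sup:
  assumes P: "P \<subseteq> {0<..<1}" "P \<in> sets borel" and p: "0 \<le> p" "p \<le> 1"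
    and below: "\<And>v. v \<in> P \<Longrightarrow> beta_dens n k v \<le> beta_dens n k p"
  shows "(LBINT v. indicator P v * ((qgap v)\<^sup>2 * beta_dens n k v))
    \<le> beta_dens n k p * (LBINT v. indicator {0<..<1} v * (qgap v)\<^sup>2)"
proof -
  have "(LBINT v. indicator P v * ((qgap v)\<^sup>2 * beta_dens n k v)) \<le>
      (LBINT v. beta_dens n k p * (indicator {0<..<1} v * (qgap v)\<^sup>2))"
  proof (rule integral_mono[OF integrable_qgap_sq_beta_dens[OF P]])
    show "integrable lborel (\<lambda>v. beta_dens n k p * (indicator {0<..<1} v * (qgap v)\<^sup>2))"
      using integrable_qgap_sq by simp
    show "indicator P v * ((qgap v)\<^sup>2 * beta_dens n k v)
        \<le> beta_dens n k p * (indicator {0<..<1} v * (qgap v)\<^sup>2)" for v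
      using P(1) below[of v] beta_dens_nonneg[OF p, of n k]
      by (cases "v \<in> P") (auto simp: indicator_def mult.commute intro: mult_right_mono)
  qed
  then show ?thesis by simp
qed

lemma integral_qgap_sq_interval_le_W2sq_os:
  assumes I: "0 < w0" "w1 < 1" and "0 \<le> T"
    and dens: "\<And>w. w \<in> {w0..w1} \<Longrightarrow> beta_dens n k p \<le> T * beta_dens n k w"
  shows "beta_dens n k p * (LBINT v. indicator {w0..w1} v * (qgap v)\<^sup>2) \<le> T * W2sq_os n k"
proof -
  have sub: "{w0..w1} \<subseteq> {0<..<1}" using I by auto
  have "beta_dens n k p * (LBINT v. indicator {w0..w1} v * (qgap v)\<^sup>2)
      = (LBINT v. beta_dens n k p * (indicator {w0..w1} v * (qgap v)\<^sup>2))" by simp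
  also have "\<dots> \<le> (LBINT v. T * (indicator {w0..w1} v * ((qgap v)\<^sup>2 * beta_dens n k v)))"
  proof (rule integral_mono)
    show "integrable lborel (\<lambda>v. beta_dens n k p * (indicator {w0..w1} v * (qgap v)\<^sup>2))"
      using integrable_indicator_subset[OF integrable_qgap_sq sub] by simp
    show "integrable lborel (\<lambda>v. T * (indicator {w0..w1} v * ((qgap v)\<^sup>2 * beta_dens n k v)))"
      using integrable_qgap_sq_beta_dens[OF sub] by simp
    show "beta_dens n k p * (indicator {w0..w1} v * (qgap v)\<^sup>2)
        \<le> T * (indicator {w0..w1} v * ((qgap v)\<^sup>2 * beta_dens n k v))" for v
      using dens[of v] mult_right_mono[of "beta_dens n k p" "T * beta_dens n k v" "(qgap v)\<^sup>2"]
      by (auto simp: indicator_def algebra_simps)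
  qed
  also have "\<dots> = T * (LBINT v. indicator {w0..w1} v * ((qgap v)\<^sup>2 * beta_dens n k v))" by simp
  also have "\<dots> \<le> T * W2sq_os n k"
    unfolding W2sq_os_def using sub \<open>0 \<le> T\<close>
    by (intro mult_left_mono integral_mono integrable_qgap_sq_beta_dens)
      (auto simp: indicator_def beta_dens_nonneg)
  finally show ?thesis .
qed

text \<open>The mass of qgap^2 on P is compared with its mass on {w0..w1}, where qgap does not
  vanish; the price is the exponential log_lik gap between p and that interval.\<close>
lemma tail_integral_le:
  assumes k: "1 \<le> k" "k \<le> n" "2 \<le> n"
    and P: "P \<subseteq> {0<..<1}" "P \<in> sets borel"
    and below: "\<And>v. v \<in> P \<Longrightarrow> beta_dens n k v \<le> beta_dens n k p"
    and p: "0 < p" "p < 1" and I: "0 < w0" "w0 < w1" "w1 < 1"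
    and G: "\<And>w. w \<in> {w0..w1} \<Longrightarrow> G0 \<le> log_lik g w"
    and K: "\<bar>real (k - 1) - g * real (n - 1)\<bar> \<le> K"
    and HI: "0 < (LBINT v. indicator {w0..w1} v * (qgap v)\<^sup>2)"
  shows "(LBINT v. indicator P v * ((qgap v)\<^sup>2 * beta_dens n k v)) \<le>
    exp (log_lik g p - G0) ^ (n - 1) * (exp (K * (log_abs_sum p + (log_abs_sum w0 + log_abs_sum w1)))
      * ((LBINT v. indicator {0<..<1} v * (qgap v)\<^sup>2) / (LBINT v. indicator {w0..w1} v * (qgap v)\<^sup>2)))
    * W2sq_os n k"
proof -
  define T where "T = exp (log_lik g p - G0) ^ (n - 1)
    * exp (K * (log_abs_sum p + (log_abs_sum w0 + log_abs_sum w1)))"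
  define H where "H = (LBINT v. indicator {0<..<1} v * (qgap v)\<^sup>2)"
  define HI where "HI = (LBINT v. indicator {w0..w1} v * (qgap v)\<^sup>2)"
  have "0 < HI" using HI by (simp add: HI_def)
  have "0 \<le> H" unfolding H_def by (rule integral_nonneg_AE) (auto simp: indicator_def)
  have "beta_dens n k p * HI \<le> T * W2sq_os n k"
    unfolding HI_def T_def using I G
    by (intro integral_qgap_sq_interval_le_W2sq_os beta_dens_le_exp_log_lik_gap[OF k p _ _ _ _ _ K])
      auto
  then have "beta_dens n k p * H \<le> (T * W2sq_os n k) * (H / HI)"
    using \<open>0 < HI\<close> \<open>0 \<le> H\<close> mult_right_mono[of "beta_dens n k p * HI" "T * W2sq_os n k" "H / HI"]
    by simp
  with integral_qgap_sq_beta_dens_le_sup[OF P _ _ below] p show ?thesis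
    unfolding T_def H_def HI_def by (simp add: algebra_simps)
qed

lemma eventually_tail_integral_le:
  assumes kk: "\<And>n. 1 \<le> n \<Longrightarrow> 1 \<le> kk n \<and> kk n \<le> n"
    and near: "\<forall>\<^sub>F n in sequentially. \<bar>real (kk n - 1) - g * real (n - 1)\<bar> \<le> K"
    and P: "P \<subseteq> {0<..<1}" "P \<in> sets borel" and p: "0 < p" "p < 1"
    and below: "\<forall>\<^sub>F n in sequentially. \<forall>v\<in>P. beta_dens n (kk n) v \<le> beta_dens n (kk n) p"
    and I: "0 < w0" "w0 < w1" "w1 < 1" "\<And>w. w \<in> {w0..w1} \<Longrightarrow> qgap w \<noteq> 0"
    and G: "\<And>w. w \<in> {w0..w1} \<Longrightarrow> G0 \<le> log_lik g w"
    and rate: "exp (log_lik g p - G0) \<le> z"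
  shows "\<exists>C\<ge>0. \<forall>\<^sub>F n in sequentially.
    (LBINT v. indicator P v * ((qgap v)\<^sup>2 * beta_dens n (kk n) v)) \<le> C * z ^ (n - 1) * W2sq_os n (kk n)"
proof -
  define H where "H = (LBINT v. indicator {0<..<1} v * (qgap v)\<^sup>2)"
  define HI where "HI = (LBINT v. indicator {w0..w1} v * (qgap v)\<^sup>2)"
  define C where "C = exp (K * (log_abs_sum p + (log_abs_sum w0 + log_abs_sum w1))) * (H / HI)"
  have "0 < HI"
    unfolding HI_def using I
    by (intro integral_indicator_interval_pos integrable_indicator_subset[OF integrable_qgap_sq]) auto
  moreover have "0 \<le> H" unfolding H_def by (rule integral_nonneg_AE) (auto simp: indicator_def)
  ultimately have "0 \<le> C" by (simp add: C_def)
  moreover have "\<forall>\<^sub>F n in sequentially.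
      (LBINT v. indicator P v * ((qgap v)\<^sup>2 * beta_dens n (kk n) v)) \<le> C * z ^ (n - 1) * W2sq_os n (kk n)"
    using eventually_ge_at_top[of 2] near below
  proof eventually_elim
    case (elim n)
    then have k: "1 \<le> kk n" "kk n \<le> n" "2 \<le> n" using kk[of n] by auto
    have "(LBINT v. indicator P v * ((qgap v)\<^sup>2 * beta_dens n (kk n) v))
        \<le> exp (log_lik g p - G0) ^ (n - 1) * C * W2sq_os n (kk n)"
      using tail_integral_le[OF k P _ p I(1-3) G elim(2) \<open>0 < HI\<close>[unfolded HI_def]] elim(3)
      by (simp add: C_def H_def HI_def mult.assoc)
    also have "\<dots> \<le> z ^ (n - 1) * C * W2sq_os n (kk n)"
      using rate \<open>0 \<le> C\<close> W2sq_os_nonneg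
      by (intro mult_right_mono power_mono) auto
    finally show ?case by (simp add: mult_ac)
  qed
  ultimately show ?thesis by blast
qed

end

section \<open>Index sequences and geometric bounds\<close>

lemma eventually_mult_le_of_bounded_dist:
  fixes x m :: "'a \<Rightarrow> real"
  assumes "p < g" "filterlim m at_top F" "\<forall>\<^sub>F n in F. \<bar>x n - g * m n\<bar> \<le> K"
  shows "\<forall>\<^sub>F n in F. p * m n \<le> x n"
proof -
  have "\<forall>\<^sub>F n in F. K / (g - p) \<le> m n" using assms(2) by (simp add: filterlim_at_top)
  with assms(3) show ?thesis
  proof eventually_elim
    case (elim n)
    then have "K \<le> (g - p) * m n" using assms(1) by (simp add: pos_divide_le_eq mult.commute)
    with elim show ?case by (simp add: abs_le_iff algebra_simps)
  qed
qed

lemma eventually_le_mult_of_bounded_dist: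
  fixes x m :: "'a \<Rightarrow> real"
  assumes "g < p" "filterlim m at_top F" "\<forall>\<^sub>F n in F. \<bar>x n - g * m n\<bar> \<le> K"
  shows "\<forall>\<^sub>F n in F. x n \<le> p * m n"
  using eventually_mult_le_of_bounded_dist[of "- p" "- g" m F "\<lambda>n. - x n" K] assms
  by (simp add: abs_minus_commute)

lemma filterlim_real_pred_sequentially: "filterlim (\<lambda>n. real (n - 1)) at_top sequentially"
  by (rule filterlim_compose[OF filterlim_real_sequentially filterlim_minus_const_nat_at_top])

lemma order_index_bounds:
  assumes "\<gamma>' \<in> {0..1}" "1 \<le> n"
  shows "1 \<le> 1 + nat \<lfloor>real (n - 1) * \<gamma>'\<rfloor>" "1 + nat \<lfloor>real (n - 1) * \<gamma>'\<rfloor> \<le> n"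
proof -
  show "1 \<le> 1 + nat \<lfloor>real (n - 1) * \<gamma>'\<rfloor>" by simp
  have "real (n - 1) * \<gamma>' \<le> real (n - 1)" using assms by (simp add: mult_left_le)
  then have "\<lfloor>real (n - 1) * \<gamma>'\<rfloor> \<le> int (n - 1)" by (metis floor_mono floor_of_nat)
  then show "1 + nat \<lfloor>real (n - 1) * \<gamma>'\<rfloor> \<le> n" using assms by linarith
qed

lemma eventually_order_index_near:
  assumes "\<And>n. \<gamma>s n \<in> {0..1}" "(\<lambda>n. \<gamma>s n - g) \<in> O(\<lambda>n. 1 / real n)"
  obtains K where "\<forall>\<^sub>F n in sequentially. \<bar>real (nat \<lfloor>real (n - 1) * \<gamma>s n\<rfloor>) - g * real (n - 1)\<bar> \<le> K"
proof -
  obtain c where "0 < c" and c: "\<forall>\<^sub>F n in sequentially. \<bar>\<gamma>s n - g\<bar> \<le> c * \<bar>1 / real n\<bar>"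
    using assms(2) by (auto simp: bigo_def)
  have "\<forall>\<^sub>F n in sequentially. \<bar>real (nat \<lfloor>real (n - 1) * \<gamma>s n\<rfloor>) - g * real (n - 1)\<bar> \<le> 1 + c"
    using c eventually_ge_at_top[of 1]
  proof eventually_elim
    case (elim n)
    define m where "m = real (n - 1)"
    define x where "x = m * \<gamma>s n"
    have "0 \<le> x" using assms(1)[of n] by (simp add: x_def m_def)
    have "m \<le> real n" "0 \<le> m" using elim(2) by (auto simp: m_def)
    have "x - g * m = m * (\<gamma>s n - g)" by (simp add: x_def algebra_simps)
    then have "\<bar>x - g * m\<bar> = m * \<bar>\<gamma>s n - g\<bar>" using \<open>0 \<le> m\<close> by (simp add: abs_mult)
    also have "\<dots> \<le> m * (c * (1 / real n))" using elim \<open>0 \<le> m\<close> by (intro mult_left_mono) auto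
    also have "\<dots> \<le> c"
      using \<open>m \<le> real n\<close> \<open>0 < c\<close> elim(2) by (simp add: field_simps)
    finally have "\<bar>x - g * m\<bar> \<le> c" .
    moreover have "real (nat \<lfloor>x\<rfloor>) \<le> x" "x < real (nat \<lfloor>x\<rfloor>) + 1" using \<open>0 \<le> x\<close> by linarith+
    ultimately show ?case unfolding x_def[symmetric] m_def[symmetric] by linarith
  qed
  then show ?thesis by (rule that)
qed

lemma le_geometric_if_eventually:
  fixes a :: "nat \<Rightarrow> real"
  assumes le_1: "\<And>n. 1 \<le> n \<Longrightarrow> a n \<le> 1" and z: "0 < z" "z \<le> 1" and "0 \<le> C"
    and ev: "\<forall>\<^sub>F n in sequentially. a n \<le> C * z ^ (n - 1)"
  shows "\<exists>C'\<ge>0. \<forall>n\<ge>1. a n \<le> C' * z ^ (n - 1)"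
proof -
  obtain N where N: "\<And>n. N \<le> n \<Longrightarrow> a n \<le> C * z ^ (n - 1)"
    using ev by (auto simp: eventually_sequentially)
  define C' where "C' = max C (1 / z ^ N)"
  have "a n \<le> C' * z ^ (n - 1)" if "1 \<le> n" for n
  proof (cases "N \<le> n")
    case True
    have "C * z ^ (n - 1) \<le> C' * z ^ (n - 1)" using z by (intro mult_right_mono) (auto simp: C'_def)
    then show ?thesis using N[OF True] by linarith
  next
    case False
    have "z ^ N \<le> z ^ (n - 1)" using False z by (intro power_decreasing) auto
    then have "1 \<le> (1 / z ^ N) * z ^ (n - 1)" using z by (simp add: field_simps)
    also have "\<dots> \<le> C' * z ^ (n - 1)" using z by (intro mult_right_mono) (auto simp: C'_def)
    finally show ?thesis using le_1[OF that] by linarith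
  qed
  moreover have "0 \<le> C'" using \<open>0 \<le> C\<close> by (simp add: C'_def)
  ultimately show ?thesis by blast
qed

lemma tendsto_0_if_le_geometric:
  fixes a :: "nat \<Rightarrow> real"
  assumes "\<And>n. 1 \<le> n \<Longrightarrow> 0 \<le> a n \<and> a n \<le> C * z ^ (n - 1)" "0 \<le> z" "z < 1"
  shows "a \<longlonglongrightarrow> 0"
proof (rule tendsto_sandwich[of "\<lambda>_. 0" _ _ "\<lambda>n. C * z ^ (n - 1)"])
  show "\<forall>\<^sub>F n in sequentially. 0 \<le> a n" "\<forall>\<^sub>F n in sequentially. a n \<le> C * z ^ (n - 1)"
    using assms(1) by (auto intro: eventually_sequentiallyI[of 1])
  have "(\<lambda>n. z ^ (Suc n - 1)) \<longlonglongrightarrow> 0" using LIMSEQ_realpow_zero[OF assms(2,3)] by simp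
  then have "(\<lambda>n. z ^ (n - 1)) \<longlonglongrightarrow> 0" by (rule LIMSEQ_imp_Suc)
  then show "(\<lambda>n. C * z ^ (n - 1)) \<longlonglongrightarrow> 0" using tendsto_mult_right_zero by blast
qed simp

section \<open>Crossings of the two cdfs around level g\<close>

lemma ereal_le_Sup_if_interval_below:
  assumes "0 < \<delta>" "{x - \<delta><..<x} \<subseteq> A"
  shows "ereal x \<le> Sup (ereal ` A)"
  unfolding le_Sup_iff
proof (intro allI impI)
  fix y assume "y < ereal x"
  then obtain r where r: "y < ereal r" "r < x" using ereal_dense2 by force
  have "max r (x - \<delta> / 2) \<in> A" using assms r(2) by auto
  moreover have "y < ereal (max r (x - \<delta> / 2))" using r(1) by (simp add: less_le_trans)
  ultimately show "\<exists>a\<in>ereal ` A. y < a" by blast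
qed

locale cdf_pair_level = cdf_pair FX FY for FX FY +
  fixes g :: real
  assumes level: "g \<in> {0..1}"
    and c_less_a: "B0 FX FY \<inter> {x. ereal x < qinv_e FX g} \<noteq> {} \<Longrightarrow> c_pt FX FY g < a_pt FX FY g"
    and b_less_d: "B0 FX FY \<inter> {x. qinv_e FX g < ereal x} \<noteq> {} \<Longrightarrow> b_pt FX FY g < d_pt FX FY g"
begin

definition "B0_below = {x. FX x < FY x \<and> FX x < g}"
definition "B0_above = {x. FX x < FY x \<and> g < FX x}"
definition "B2_below = {x. FX x \<noteq> FY x \<and> FX x < g}"
definition "B2_above = {x. FX x \<noteq> FY x \<and> g < FX x}"

definition "Fa = Fe FX (a_pt FX FY g)"
definition "Fb = Fe FX (b_pt FX FY g)"
definition "Fc = Fe FX (c_pt FX FY g)"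
definition "Fd = Fe FX (d_pt FX FY g)"

lemma qinv_e_level_iff: "ereal y < qinv_e FX g \<longleftrightarrow> FX y < g" "qinv_e FX g < ereal y \<longleftrightarrow> g < FX y"
  using X.qinv_e_less_iff[OF level] by auto

lemma c_pt_eq: "c_pt FX FY g = Sup (ereal ` B0_below)"
  unfolding c_pt_def B0_below_def B0_def qinv_e_level_iff by (rule arg_cong[where f=Sup]) auto
lemma a_pt_eq: "a_pt FX FY g = Sup (ereal ` B2_below)"
  unfolding a_pt_def B2_below_def B2_def qinv_e_level_iff by (rule arg_cong[where f=Sup]) auto
lemma d_pt_eq: "d_pt FX FY g = Inf (ereal ` B0_above)"
  unfolding d_pt_def B0_above_def B0_def qinv_e_level_iff by (rule arg_cong[where f=Inf]) auto
lemma b_pt_eq: "b_pt FX FY g = Inf (ereal ` B2_above)"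
  unfolding b_pt_def B2_above_def B2_def qinv_e_level_iff by (rule arg_cong[where f=Inf]) auto

lemma Sup_B0_below_less_Sup_B2_below: "B0_below \<noteq> {} \<Longrightarrow> Sup (ereal ` B0_below) < Sup (ereal ` B2_below)"
  using c_less_a unfolding c_pt_eq a_pt_eq by (auto simp: B0_below_def B0_def qinv_e_level_iff)

lemma Inf_B2_above_less_Inf_B0_above: "B0_above \<noteq> {} \<Longrightarrow> Inf (ereal ` B2_above) < Inf (ereal ` B0_above)"
  using b_less_d unfolding b_pt_eq d_pt_eq by (auto simp: B0_above_def B0_def qinv_e_level_iff)

lemma Fc_less_Fa: "B0_below \<noteq> {} \<Longrightarrow> Fc < Fa"
  unfolding Fc_def Fa_def c_pt_eq a_pt_eq using Sup_B0_below_less_Sup_B2_below X.Fe_less by blast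

lemma Fb_less_Fd: "B0_above \<noteq> {} \<Longrightarrow> Fb < Fd"
  unfolding Fb_def Fd_def b_pt_eq d_pt_eq using Inf_B2_above_less_Inf_B0_above X.Fe_less by blast

lemma le_Fc: "x \<in> B0_below \<Longrightarrow> FX x \<le> Fc"
  unfolding Fc_def c_pt_eq using X.Fe_mono[of "ereal x" "Sup (ereal ` B0_below)"]
  by (simp add: Sup_upper Fe_def)

lemma Fd_le: "x \<in> B0_above \<Longrightarrow> Fd \<le> FX x"
  unfolding Fd_def d_pt_eq using X.Fe_mono[of "Inf (ereal ` B0_above)" "ereal x"]
  by (simp add: Inf_lower Fe_def)

lemma Fc_pos: "B0_below \<noteq> {} \<Longrightarrow> 0 < Fc"
  using le_Fc X.gt_0 by (meson ex_in_conv less_le_trans)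

lemma Fd_less_1: "B0_above \<noteq> {} \<Longrightarrow> Fd < 1"
  using Fd_le X.less_1 by (meson ex_in_conv le_less_trans)

lemma Fc_eq_0: "B0_below = {} \<Longrightarrow> Fc = 0"
  by (simp add: Fc_def c_pt_eq Fe_def bot_ereal_def)

lemma Fd_eq_1: "B0_above = {} \<Longrightarrow> Fd = 1"
  by (simp add: Fd_def d_pt_eq Fe_def top_ereal_def)

lemma B0_below_empty_if_level_0: "g = 0 \<Longrightarrow> B0_below = {}"
  unfolding B0_below_def using X.gt_0 by (metis (mono_tags, lifting) empty_Collect_eq not_less_iff_gr_or_eq)

lemma B0_above_empty_if_level_1: "g = 1 \<Longrightarrow> B0_above = {}"
  unfolding B0_above_def using X.less_1 by (metis (mono_tags, lifting) empty_Collect_eq not_less_iff_gr_or_eq)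

lemma Fa_le_level: "Fa \<le> g"
proof -
  have "a_pt FX FY g \<le> qinv_e FX g"
    unfolding a_pt_eq by (rule Sup_least) (auto simp: B2_below_def qinv_e_level_iff less_imp_le)
  from X.Fe_mono[OF this] have "Fa \<le> Fe FX (qinv_e FX g)" by (simp add: Fa_def)
  also have "Fe FX (qinv_e FX g) \<le> g"
  proof (cases "qinv_e FX g")
    case (real r)
    then show ?thesis using qinv_e_level_iff(2)[of r] by (simp add: Fe_def)
  next
    case PInf
    then have "\<And>y. FX y < g" using qinv_e_level_iff(1) by simp
    then have "1 \<le> g"
      by (intro tendsto_upperbound[OF X.lim_at_top]) (auto intro: always_eventually less_imp_le)
    then show ?thesis using PInf by (simp add: Fe_def)
  qed (use level in \<open>auto simp: Fe_def\<close>)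
  finally show ?thesis .
qed

lemma level_le_Fb: "g \<le> Fb"
proof -
  have "qinv_e FX g \<le> b_pt FX FY g"
    unfolding b_pt_eq by (rule Inf_greatest) (auto simp: B2_above_def qinv_e_level_iff less_imp_le)
  from X.Fe_mono[OF this] have "Fe FX (qinv_e FX g) \<le> Fb" by (simp add: Fb_def)
  moreover have "g \<le> Fe FX (qinv_e FX g)"
  proof (cases "qinv_e FX g")
    case (real r)
    then show ?thesis using qinv_e_level_iff(1)[of r] by (simp add: Fe_def)
  next
    case MInf
    then have "\<And>y. g < FX y" using qinv_e_level_iff(2) by simp
    then have "g \<le> 0"
      by (intro tendsto_lowerbound[OF X.lim_at_bot]) (auto intro: always_eventually less_imp_le)
    then show ?thesis using MInf by (simp add: Fe_def)
  qed (use level in \<open>auto simp: Fe_def\<close>)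
  ultimately show ?thesis by simp
qed

lemma Fc_less_1: "Fc < 1"
  using Fc_less_Fa Fa_le_level level Fc_eq_0 by (cases "B0_below = {}") force+

lemma Fd_pos: "0 < Fd"
  using Fb_less_Fd level_le_Fb level Fd_eq_1 by (cases "B0_above = {}") force+

lemma qgap_FX_nonzero_near:
  assumes "FX x0 \<noteq> FY x0"
  obtains \<delta> where "0 < \<delta>" "\<And>x. \<bar>x - x0\<bar> < \<delta> \<Longrightarrow> qgap (FX x) \<noteq> 0"
proof -
  have "open {x. FX x \<noteq> FY x}"
    by (rule open_Collect_neq[OF X.continuous_F Y.continuous_F])
  then obtain \<delta> where "0 < \<delta>" and \<delta>: "\<And>x. \<bar>x - x0\<bar> < \<delta> \<Longrightarrow> FX x \<noteq> FY x"
    using assms unfolding open_dist by (auto simp: dist_real_def)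
  moreover have "qgap (FX x) \<noteq> 0" if "FX x \<noteq> FY x" for x
    using that Y.F_qinv[OF X.gt_0 X.less_1, of x] X.qinv_eqI[of x "FX x"] by (auto simp: qgap_def)
  ultimately show ?thesis using that by blast
qed

text \<open>Where the quantile excess qgap is positive, the cdfs are in the order FX < FY, so
  by the separation hypotheses such levels stay off a neighbourhood of g.\<close>
lemma excess_region:
  assumes v: "0 < v" "v < 1" and pos: "0 < qgap v"
  shows "v \<le> Fc \<or> Fd \<le> v"
proof -
  define x where "x = qinv FX v"
  have Fx: "FX x = v" using X.F_qinv[OF v] by (simp add: x_def)
  have B: "FX x < FY x"
    using pos Y.qinv_less_iff[OF v, of x] Fx by (simp add: qgap_def x_def)
  consider "FX x < g" | "g < FX x" | "FX x = g" by linarith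
  then show ?thesis
  proof cases
    case 1
    then show ?thesis using le_Fc[of x] B Fx by (simp add: B0_below_def)
  next
    case 2
    then show ?thesis using Fd_le[of x] B Fx by (simp add: B0_above_def)
  next
    case 3
    have "open {x. FX x < FY x}"
      by (rule open_Collect_less[OF X.continuous_F Y.continuous_F])
    then obtain \<delta> where "0 < \<delta>" and \<delta>: "\<And>y. \<bar>y - x\<bar> < \<delta> \<Longrightarrow> FX y < FY y"
      using B unfolding open_dist by (auto simp: dist_real_def)
    have "{x - \<delta><..<x} \<subseteq> B0_below"
      using \<delta> X.less_iff 3 by (auto simp: B0_below_def)
    then have "B0_below \<noteq> {}" "ereal x \<le> Sup (ereal ` B0_below)"
      using ereal_le_Sup_if_interval_below[OF \<open>0 < \<delta>\<close>] \<open>0 < \<delta>\<close> by auto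
    moreover have "Sup (ereal ` B2_below) \<le> ereal x"
      using 3 X.less_iff by (auto simp: B2_below_def intro!: Sup_least)
    ultimately show ?thesis using Sup_B0_below_less_Sup_B2_below by (meson leD less_le_trans)
  qed
qed

lemma gap_interval_below:
  assumes "B0_below \<noteq> {}" "0 < e" "e < Fa - Fc"
  obtains w0 w1 where "0 < w0" "w0 < w1" "w1 < 1" "Fa - e \<le> w0" "w1 \<le> Fa"
    "\<And>w. w \<in> {w0..w1} \<Longrightarrow> qgap w \<noteq> 0"
proof -
  have "0 < Fa - e" "Fa - e < 1" using Fc_pos[OF assms(1)] assms Fa_le_level level by auto
  then obtain y where y: "FX y = Fa - e" using X.F_qinv by blast
  have "ereal y < Sup (ereal ` B2_below)"
  proof (rule ccontr)
    assume "\<not> ?thesis"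
    then have "Fa \<le> FX y" using X.Fe_mono[of "Sup (ereal ` B2_below)" "ereal y"]
      by (simp add: Fa_def a_pt_eq Fe_def)
    with y assms show False by simp
  qed
  then obtain x0 where x0: "x0 \<in> B2_below" "y < x0" by (auto simp: less_Sup_iff)
  have "FX x0 \<le> Fa"
    using X.Fe_mono[of "ereal x0" "Sup (ereal ` B2_below)"] x0(1)
    by (simp add: Fa_def a_pt_eq Sup_upper Fe_def)
  obtain \<delta> where "0 < \<delta>" and \<delta>: "\<And>x. \<bar>x - x0\<bar> < \<delta> \<Longrightarrow> qgap (FX x) \<noteq> 0"
    using qgap_FX_nonzero_near x0(1) by (auto simp: B2_below_def)
  define x1 where "x1 = x0 - min \<delta> (x0 - y) / 2"
  have x1: "y < x1" "x1 < x0" "x0 - x1 < \<delta>"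
    using \<open>0 < \<delta>\<close> x0(2) by (auto simp: x1_def min_def field_simps)
  show ?thesis
  proof (rule that[of "FX x1" "FX x0"])
    show "0 < FX x1" "FX x1 < FX x0" "FX x0 < 1" "FX x0 \<le> Fa"
      using X.gt_0 X.less_1 X.less_iff x1 \<open>FX x0 \<le> Fa\<close> by auto
    show "Fa - e \<le> FX x1" using X.less_iff[of y x1] x1 y by simp
    fix w assume w: "w \<in> {FX x1..FX x0}"
    then have "0 < w" "w < 1" using X.gt_0[of x1] X.less_1[of x0] by auto
    then have Fq: "FX (qinv FX w) = w" by (rule X.F_qinv)
    then have "x1 \<le> qinv FX w" "qinv FX w \<le> x0"
      using w X.le_iff[of x1 "qinv FX w"] X.le_iff[of "qinv FX w" x0] by auto
    then show "qgap w \<noteq> 0" using \<delta>[of "qinv FX w"] x1 Fq by auto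
  qed
qed

lemma gap_interval_above:
  assumes "B0_above \<noteq> {}" "0 < e" "e < Fd - Fb"
  obtains w0 w1 where "0 < w0" "w0 < w1" "w1 < 1" "Fb \<le> w0" "w1 \<le> Fb + e"
    "\<And>w. w \<in> {w0..w1} \<Longrightarrow> qgap w \<noteq> 0"
proof -
  have "0 < Fb + e" "Fb + e < 1" using Fd_less_1[OF assms(1)] assms level_le_Fb level by auto
  then obtain y where y: "FX y = Fb + e" using X.F_qinv by blast
  have "Inf (ereal ` B2_above) < ereal y"
  proof (rule ccontr)
    assume "\<not> ?thesis"
    then have "FX y \<le> Fb" using X.Fe_mono[of "ereal y" "Inf (ereal ` B2_above)"]
      by (simp add: Fb_def b_pt_eq Fe_def)
    with y assms show False by simp
  qed
  then obtain x0 where x0: "x0 \<in> B2_above" "x0 < y" by (auto simp: Inf_less_iff)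
  have "Fb \<le> FX x0"
    using X.Fe_mono[of "Inf (ereal ` B2_above)" "ereal x0"] x0(1)
    by (simp add: Fb_def b_pt_eq Inf_lower Fe_def)
  obtain \<delta> where "0 < \<delta>" and \<delta>: "\<And>x. \<bar>x - x0\<bar> < \<delta> \<Longrightarrow> qgap (FX x) \<noteq> 0"
    using qgap_FX_nonzero_near x0(1) by (auto simp: B2_above_def)
  define x1 where "x1 = x0 + min \<delta> (y - x0) / 2"
  have x1: "x1 < y" "x0 < x1" "x1 - x0 < \<delta>"
    using \<open>0 < \<delta>\<close> x0(2) by (auto simp: x1_def min_def field_simps)
  show ?thesis
  proof (rule that[of "FX x0" "FX x1"])
    show "0 < FX x0" "FX x0 < FX x1" "FX x1 < 1" "Fb \<le> FX x0"
      using X.gt_0 X.less_1 X.less_iff x1 \<open>Fb \<le> FX x0\<close> by auto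
    show "FX x1 \<le> Fb + e" using X.less_iff[of x1 y] x1 y by simp
    fix w assume w: "w \<in> {FX x0..FX x1}"
    then have "0 < w" "w < 1" using X.gt_0[of x0] X.less_1[of x1] by auto
    then have Fq: "FX (qinv FX w) = w" by (rule X.F_qinv)
    then have "x0 \<le> qinv FX w" "qinv FX w \<le> x1"
      using w X.le_iff[of x0 "qinv FX w"] X.le_iff[of "qinv FX w" x1] by auto
    then show "qgap w \<noteq> 0" using \<delta>[of "qinv FX w"] x1 Fq by auto
  qed
qed

definition "eps0 = min (if B0_below = {} then 1 else Fa - Fc) (if B0_above = {} then 1 else Fd - Fb)"

definition "lower_rate e = exp (log_lik g Fc - log_lik g (Fa - e))"
definition "upper_rate e = exp (log_lik g Fd - log_lik g (Fb + e))"

lemma eps0_pos: "0 < eps0"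
  unfolding eps0_def using Fc_less_Fa Fb_less_Fd by auto

lemma lower_levels:
  assumes "B0_below \<noteq> {}" "0 < e" "e < eps0"
  shows "0 < Fc" "Fc < Fa - e" "Fa - e \<le> g" "Fa - e < 1"
  using assms Fc_pos Fa_le_level level by (auto simp: eps0_def split: if_splits)

lemma upper_levels:
  assumes "B0_above \<noteq> {}" "0 < e" "e < eps0"
  shows "Fd < 1" "Fb + e < Fd" "g \<le> Fb + e" "0 < Fb + e"
  using assms Fd_less_1 level_le_Fb level by (auto simp: eps0_def split: if_splits)

lemma lower_rate_less_1: "B0_below \<noteq> {} \<Longrightarrow> 0 < e \<Longrightarrow> e < eps0 \<Longrightarrow> lower_rate e < 1"
  unfolding lower_rate_def using log_lik_strict_mono_below lower_levels by simp

lemma upper_rate_less_1: "B0_above \<noteq> {} \<Longrightarrow> 0 < e \<Longrightarrow> e < eps0 \<Longrightarrow> upper_rate e < 1"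
  unfolding upper_rate_def using log_lik_strict_antimono_above upper_levels by simp

lemma powr_ratio_eq_exp_log_lik:
  assumes "0 < p" "p < 1" "0 < q" "q < 1"
  shows "(p / q) powr a * ((1 - p) / (1 - q)) powr (1 - a) = exp (log_lik a p - log_lik a q)"
  using assms by (simp add: powr_def exp_add[symmetric] ln_div log_lik_def algebra_simps)

lemma lower_term_eq:
  assumes "0 < e" "e < eps0"
  shows "(Fc / (Fa - e)) powr g * ((1 - Fc) / (1 - Fa + e)) powr (1 - g)
    = (if B0_below = {} then 0 else lower_rate e)"
proof (cases "B0_below = {}")
  case False
  then show ?thesis
    using powr_ratio_eq_exp_log_lik[of Fc "Fa - e" g] lower_levels[OF False assms]
    by (simp add: lower_rate_def algebra_simps)
qed (simp add: Fc_eq_0)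

lemma upper_term_eq:
  assumes "0 < e" "e < eps0"
  shows "(Fd / (Fb + e)) powr g * ((1 - Fd) / (1 - Fb - e)) powr (1 - g)
    = (if B0_above = {} then 0 else upper_rate e)"
proof (cases "B0_above = {}")
  case False
  then show ?thesis
    using powr_ratio_eq_exp_log_lik[of Fd "Fb + e" g] upper_levels[OF False assms]
    by (simp add: upper_rate_def algebra_simps)
qed (simp add: Fd_eq_1)

text \<open>At the extreme levels g = 0 and g = 1 one of the two terms of z_rate degenerates,
  but the remaining closed form is still the corresponding rate.\<close>
lemma z_rate_eq_max:
  assumes e: "0 < e" "e < eps0"
  shows "z_rate FX FY g e = max (if B0_below = {} then 0 else lower_rate e) (if B0_above = {} then 0 else upper_rate e)"
proof -
  have z: "z_rate FX FY g e = (if g = 0 then (1 - Fd) / (1 - Fb - e) else if g = 1 then Fc / (Fa - e)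
    else max ((Fc / (Fa - e)) powr g * ((1 - Fc) / (1 - Fa + e)) powr (1 - g))
             ((Fd / (Fb + e)) powr g * ((1 - Fd) / (1 - Fb - e)) powr (1 - g)))"
    by (simp only: z_rate_def Let_def Fa_def Fb_def Fc_def Fd_def)
  have "0 < Fb + e" using level_le_Fb level e by simp
  have "0 < Fd" by (rule Fd_pos)
  have "0 \<le> (1 - Fd) / (1 - Fb - e)"
    using upper_levels[OF _ e] Fd_eq_1 by (cases "B0_above = {}") auto
  have "Fc < 1" by (rule Fc_less_1)
  have "Fa - e < 1" using Fa_le_level level e by simp
  have "0 \<le> Fc / (Fa - e)" using lower_levels[OF _ e] Fc_eq_0 by (cases "B0_below = {}") auto
  have upper_nonneg: "0 \<le> (if B0_above = {} then 0 else upper_rate e)"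
    and lower_nonneg: "0 \<le> (if B0_below = {} then 0 else lower_rate e)"
    by (simp_all add: upper_rate_def lower_rate_def)
  consider "g = 0" | "g = 1" | "g \<noteq> 0" "g \<noteq> 1" by blast
  then show ?thesis
  proof cases
    case 1
    have "(Fd / (Fb + e)) powr a * ((1 - Fd) / (1 - Fb - e)) powr (1 - a) = (1 - Fd) / (1 - Fb - e)"
      if "a = 0" for a
      using that \<open>0 < Fb + e\<close> \<open>0 < Fd\<close> abs_of_nonneg[OF \<open>0 \<le> (1 - Fd) / (1 - Fb - e)\<close>]
      by (simp add: abs_divide)
    then have "z_rate FX FY g e = (if B0_above = {} then 0 else upper_rate e)"
      unfolding z if_P[OF 1] using upper_term_eq[OF e] 1 by metis
    then show ?thesis using B0_below_empty_if_level_0[OF 1] upper_nonneg by simp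
  next
    case 2
    have "(Fc / (Fa - e)) powr a * ((1 - Fc) / (1 - Fa + e)) powr (1 - a) = Fc / (Fa - e)"
      if "a = 1" for a
      using that \<open>Fc < 1\<close> \<open>Fa - e < 1\<close> abs_of_nonneg[OF \<open>0 \<le> Fc / (Fa - e)\<close>]
      by (simp add: abs_divide)
    then have "z_rate FX FY g e = (if B0_below = {} then 0 else lower_rate e)"
      unfolding z if_not_P[of "g = 0"] if_P[OF 2] using lower_term_eq[OF e] 2 by (metis zero_neq_one)
    then show ?thesis using B0_above_empty_if_level_1[OF 2] lower_nonneg by simp
  next
    case 3
    then show ?thesis unfolding z if_not_P[OF 3(1)] if_not_P[OF 3(2)]
      using lower_term_eq[OF e] upper_term_eq[OF e] by simp
  qed
qed

lemma z_rate_nonneg: "0 < e \<Longrightarrow> e < eps0 \<Longrightarrow> 0 \<le> z_rate FX FY g e"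
  by (simp add: z_rate_eq_max lower_rate_def upper_rate_def le_max_iff_disj)

lemma z_rate_less_1: "0 < e \<Longrightarrow> e < eps0 \<Longrightarrow> z_rate FX FY g e < 1"
  using lower_rate_less_1 upper_rate_less_1 by (simp add: z_rate_eq_max)

lemma excess_os_le_tails:
  "excess_os n k \<le> (LBINT v. indicator {0<..Fc} v * ((qgap v)\<^sup>2 * beta_dens n k v))
    + (LBINT v. indicator {Fd..<1} v * ((qgap v)\<^sup>2 * beta_dens n k v))"
proof -
  have sub: "{0<..Fc} \<subseteq> {0<..<1}" "{Fd..<1} \<subseteq> {0<..<1}" using Fc_less_1 Fd_pos by auto
  have "excess_os n k \<le> (LBINT v. indicator {0<..Fc} v * ((qgap v)\<^sup>2 * beta_dens n k v)
      + indicator {Fd..<1} v * ((qgap v)\<^sup>2 * beta_dens n k v))"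
    unfolding excess_os_def
  proof (rule integral_mono)
    have "continuous_on UNIV (\<lambda>x::real. (max x 0)\<^sup>2)" by (intro continuous_intros)
    moreover have "(max x 0)\<^sup>2 \<le> x\<^sup>2" for x :: real by (cases "0 \<le> x") (auto simp: max_def)
    ultimately show "integrable lborel (\<lambda>v. indicator {0<..<1} v * ((max (qgap v) 0)\<^sup>2 * beta_dens n k v))"
      by (intro integrable_comp_qgap_beta_dens[of "\<lambda>x. (max x 0)\<^sup>2"]) auto
    show "integrable lborel (\<lambda>v. indicator {0<..Fc} v * ((qgap v)\<^sup>2 * beta_dens n k v)
        + indicator {Fd..<1} v * ((qgap v)\<^sup>2 * beta_dens n k v))"
      using sub by (intro Bochner_Integration.integrable_add integrable_qgap_sq_beta_dens) auto
    fix v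
    show "indicator {0<..<1} v * ((max (qgap v) 0)\<^sup>2 * beta_dens n k v) \<le>
        indicator {0<..Fc} v * ((qgap v)\<^sup>2 * beta_dens n k v)
        + indicator {Fd..<1} v * ((qgap v)\<^sup>2 * beta_dens n k v)"
    proof (cases "v \<in> {0<..<1} \<and> 0 < qgap v")
      case True
      then have "v \<in> {0<..Fc} \<or> v \<in> {Fd..<1}" using excess_region by auto
      then show ?thesis using True sub beta_dens_nonneg[of v n k]
        by (auto simp: indicator_def max_def)
    next
      case False
      then have "indicator {0<..<1} v * ((max (qgap v) 0)\<^sup>2 * beta_dens n k v) = 0"
        by (auto simp: indicator_def max_def)
      moreover have "0 \<le> indicator A v * ((qgap v)\<^sup>2 * beta_dens n k v)" if "A \<subseteq> {0<..<1}" for A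
        using that beta_dens_nonneg[of v n k] by (cases "v \<in> A") (auto simp: subset_iff)
      ultimately show ?thesis using sub by (metis add_nonneg_nonneg)
    qed
  qed
  also have "\<dots> = (LBINT v. indicator {0<..Fc} v * ((qgap v)\<^sup>2 * beta_dens n k v))
    + (LBINT v. indicator {Fd..<1} v * ((qgap v)\<^sup>2 * beta_dens n k v))"
    using sub by (intro Bochner_Integration.integral_add integrable_qgap_sq_beta_dens) auto
  finally show ?thesis .
qed

lemma excess_os_eq_0_if_no_crossing:
  assumes "B0_below = {}" "B0_above = {}"
  shows "excess_os n k = 0"
proof -
  have "indicator {0<..<1} v * ((max (qgap v) 0)\<^sup>2 * beta_dens n k v) = 0" for v
    using excess_region[of v] Fc_eq_0[OF assms(1)] Fd_eq_1[OF assms(2)]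
    by (auto simp: indicator_def max_def)
  then show ?thesis unfolding excess_os_def by (simp only: integral_zero)
qed

lemma lower_tail_bound:
  assumes e: "0 < e" "e < eps0"
    and kk: "\<And>n. 1 \<le> n \<Longrightarrow> 1 \<le> kk n \<and> kk n \<le> n"
    and near: "\<forall>\<^sub>F n in sequentially. \<bar>real (kk n - 1) - g * real (n - 1)\<bar> \<le> K"
  shows "\<exists>C\<ge>0. \<forall>\<^sub>F n in sequentially. (LBINT v. indicator {0<..Fc} v * ((qgap v)\<^sup>2 * beta_dens n (kk n) v))
    \<le> C * z_rate FX FY g e ^ (n - 1) * W2sq_os n (kk n)"
proof (cases "B0_below = {}")
  case True
  then show ?thesis by (intro exI[of _ 0]) (simp add: Fc_eq_0)
next
  case False
  note lv = lower_levels[OF False e]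
  have "e < Fa - Fc" using e False by (simp add: eps0_def split: if_splits)
  then obtain w0 w1 where I: "0 < w0" "w0 < w1" "w1 < 1" "Fa - e \<le> w0" "w1 \<le> Fa"
    "\<And>w. w \<in> {w0..w1} \<Longrightarrow> qgap w \<noteq> 0"
    using gap_interval_below[OF False e(1)] by blast
  have "\<forall>\<^sub>F n in sequentially. Fc * real (n - 1) \<le> real (kk n - 1)"
    using lv Fa_le_level by (intro eventually_mult_le_of_bounded_dist[OF _ filterlim_real_pred_sequentially near])
      auto
  with eventually_ge_at_top[of 2]
  have below: "\<forall>\<^sub>F n in sequentially. \<forall>v\<in>{0<..Fc}. beta_dens n (kk n) v \<le> beta_dens n (kk n) Fc"
  proof eventually_elim
    case (elim n)
    show ?case
    proof
      fix v assume "v \<in> {0<..Fc}"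
      then show "beta_dens n (kk n) v \<le> beta_dens n (kk n) Fc"
        using kk[of n] elim Fc_less_1 by (intro beta_dens_mono_below_mode) auto
    qed
  qed
  have G: "log_lik g (Fa - e) \<le> log_lik g w" if "w \<in> {w0..w1}" for w
    using that I lv Fa_le_level by (intro log_lik_mono_below) auto
  have rate: "exp (log_lik g Fc - log_lik g (Fa - e)) \<le> z_rate FX FY g e"
    using z_rate_eq_max[OF e] False by (simp add: lower_rate_def)
  have sub: "{0<..Fc} \<subseteq> {0<..<1}" using Fc_less_1 by auto
  show ?thesis
    by (rule eventually_tail_integral_le[OF kk near sub _ lv(1) Fc_less_1 below I(1-3,6) G rate]) measurable
qed

lemma upper_tail_bound:
  assumes e: "0 < e" "e < eps0"
    and kk: "\<And>n. 1 \<le> n \<Longrightarrow> 1 \<le> kk n \<and> kk n \<le> n"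
    and near: "\<forall>\<^sub>F n in sequentially. \<bar>real (kk n - 1) - g * real (n - 1)\<bar> \<le> K"
  shows "\<exists>C\<ge>0. \<forall>\<^sub>F n in sequentially. (LBINT v. indicator {Fd..<1} v * ((qgap v)\<^sup>2 * beta_dens n (kk n) v))
    \<le> C * z_rate FX FY g e ^ (n - 1) * W2sq_os n (kk n)"
proof (cases "B0_above = {}")
  case True
  then show ?thesis by (intro exI[of _ 0]) (simp add: Fd_eq_1)
next
  case False
  note lv = upper_levels[OF False e]
  have "e < Fd - Fb" using e False by (simp add: eps0_def split: if_splits)
  then obtain w0 w1 where I: "0 < w0" "w0 < w1" "w1 < 1" "Fb \<le> w0" "w1 \<le> Fb + e"
    "\<And>w. w \<in> {w0..w1} \<Longrightarrow> qgap w \<noteq> 0"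
    using gap_interval_above[OF False e(1)] by blast
  have "\<forall>\<^sub>F n in sequentially. real (kk n - 1) \<le> Fd * real (n - 1)"
    using lv level_le_Fb e
    by (intro eventually_le_mult_of_bounded_dist[OF _ filterlim_real_pred_sequentially near]) auto
  with eventually_ge_at_top[of 2]
  have below: "\<forall>\<^sub>F n in sequentially. \<forall>v\<in>{Fd..<1}. beta_dens n (kk n) v \<le> beta_dens n (kk n) Fd"
  proof eventually_elim
    case (elim n)
    show ?case
    proof
      fix v assume "v \<in> {Fd..<1}"
      then show "beta_dens n (kk n) v \<le> beta_dens n (kk n) Fd"
        using kk[of n] elim Fd_pos by (intro beta_dens_antimono_above_mode) auto
    qed
  qed
  have G: "log_lik g (Fb + e) \<le> log_lik g w" if "w \<in> {w0..w1}" for w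
    using that I lv level_le_Fb by (intro log_lik_antimono_above) auto
  have rate: "exp (log_lik g Fd - log_lik g (Fb + e)) \<le> z_rate FX FY g e"
    using z_rate_eq_max[OF e] False by (simp add: upper_rate_def)
  have sub: "{Fd..<1} \<subseteq> {0<..<1}" using Fd_pos by auto
  show ?thesis
    by (rule eventually_tail_integral_le[OF kk near sub _ Fd_pos lv(1) below I(1-3,6) G rate]) measurable
qed

lemma eps_W2_os_le_geometric:
  assumes e: "0 < e" "e < eps0"
    and kk: "\<And>n. 1 \<le> n \<Longrightarrow> 1 \<le> kk n \<and> kk n \<le> n"
    and near: "\<forall>\<^sub>F n in sequentially. \<bar>real (kk n - 1) - g * real (n - 1)\<bar> \<le> K"
  shows "\<exists>C\<ge>0. \<forall>n\<ge>1. eps_W2 (os_cdf FX n (kk n)) (os_cdf FY n (kk n)) \<le> C * z_rate FX FY g e ^ (n - 1)"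
proof (cases "B0_below = {} \<and> B0_above = {}")
  case True
  then have "eps_W2 (os_cdf FX n (kk n)) (os_cdf FY n (kk n)) = 0" if "1 \<le> n" for n
    using eps_W2_os_cdf[of "kk n" n] kk[OF that] excess_os_eq_0_if_no_crossing by simp
  then show ?thesis by (intro exI[of _ 0]) auto
next
  case False
  let ?z = "z_rate FX FY g e"
  have "0 < ?z"
    using False z_rate_eq_max[OF e] by (auto simp: lower_rate_def upper_rate_def less_max_iff_disj)
  obtain C1 where "0 \<le> C1" and C1: "\<forall>\<^sub>F n in sequentially.
      (LBINT v. indicator {0<..Fc} v * ((qgap v)\<^sup>2 * beta_dens n (kk n) v)) \<le> C1 * ?z ^ (n - 1) * W2sq_os n (kk n)"
    using lower_tail_bound[OF e kk near] by blast
  obtain C2 where "0 \<le> C2" and C2: "\<forall>\<^sub>F n in sequentially.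
      (LBINT v. indicator {Fd..<1} v * ((qgap v)\<^sup>2 * beta_dens n (kk n) v)) \<le> C2 * ?z ^ (n - 1) * W2sq_os n (kk n)"
    using upper_tail_bound[OF e kk near] by blast
  have "\<forall>\<^sub>F n in sequentially. eps_W2 (os_cdf FX n (kk n)) (os_cdf FY n (kk n)) \<le> (C1 + C2) * ?z ^ (n - 1)"
    using C1 C2 eventually_ge_at_top[of 1]
  proof eventually_elim
    case (elim n)
    have "excess_os n (kk n) \<le> ((C1 + C2) * ?z ^ (n - 1)) * W2sq_os n (kk n)"
      using excess_os_le_tails[of n "kk n"] elim(1,2) by (simp add: algebra_simps)
    moreover have "0 \<le> (C1 + C2) * ?z ^ (n - 1)" using \<open>0 \<le> C1\<close> \<open>0 \<le> C2\<close> \<open>0 < ?z\<close> by simp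
    ultimately show ?case
      using eps_W2_os_cdf[of "kk n" n] kk[OF elim(3)] W2sq_os_nonneg[of n "kk n"]
      by (simp add: divide_le_eq)
  qed
  moreover have "eps_W2 (os_cdf FX n (kk n)) (os_cdf FY n (kk n)) \<le> 1" if "1 \<le> n" for n
    using eps_W2_os_cdf[of "kk n" n] kk[OF that] excess_os_le_W2sq_os[of n "kk n"]
      W2sq_os_nonneg[of n "kk n"] by (simp add: divide_le_eq)
  ultimately show ?thesis
    using le_geometric_if_eventually[of _ ?z "C1 + C2"] \<open>0 < ?z\<close> z_rate_less_1[OF e]
      \<open>0 \<le> C1\<close> \<open>0 \<le> C2\<close> by simp
qed

end

theorem theorem3p8:
  fixes FX FY :: "real \<Rightarrow> real" and \<gamma> :: real and \<gamma>s :: "nat \<Rightarrow> real"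
  assumes cdfX: "is_cdf FX" and contX: "continuous_on UNIV FX" and smX: "strict_mono FX"
      and momX: "finite_second_moment FX"
      and cdfY: "is_cdf FY" and contY: "continuous_on UNIV FY" and smY: "strict_mono FY"
      and momY: "finite_second_moment FY"
      and gam: "\<gamma> \<in> {0..1}"
      and hc: "B0 FX FY \<inter> {x. ereal x < qinv_e FX \<gamma>} \<noteq> {} \<Longrightarrow> c_pt FX FY \<gamma> < a_pt FX FY \<gamma>"
      and hd: "B0 FX FY \<inter> {x. qinv_e FX \<gamma> < ereal x} \<noteq> {} \<Longrightarrow> b_pt FX FY \<gamma> < d_pt FX FY \<gamma>"
      and gs01: "\<And>n. \<gamma>s n \<in> {0..1}"
      and gsO: "(\<lambda>n. \<gamma>s n - \<gamma>) \<in> O(\<lambda>n. 1 / real n)"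
  shows "(\<exists>\<epsilon>0>0. \<forall>\<epsilon>. 0 < \<epsilon> \<and> \<epsilon> < \<epsilon>0 \<longrightarrow>
            0 \<le> z_rate FX FY \<gamma> \<epsilon> \<and> z_rate FX FY \<gamma> \<epsilon> < 1 \<and>
            (\<exists>C\<ge>0. \<forall>n\<ge>1.
               eps_W2 (os_cdf FX n (1 + nat \<lfloor>real (n - 1) * \<gamma>s n\<rfloor>))
                      (os_cdf FY n (1 + nat \<lfloor>real (n - 1) * \<gamma>s n\<rfloor>))
               \<le> C * z_rate FX FY \<gamma> \<epsilon> ^ (n - 1)))
       \<and> d_ast_le (\<lambda>n. os_cdf FX n (1 + nat \<lfloor>real (n - 1) * \<gamma>s n\<rfloor>))
                  (\<lambda>n. os_cdf FY n (1 + nat \<lfloor>real (n - 1) * \<gamma>s n\<rfloor>))"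
proof -
  interpret cdf_pair_level FX FY \<gamma>
    using assms by unfold_locales (auto simp: is_cdf_def)
  define kk where "kk n = 1 + nat \<lfloor>real (n - 1) * \<gamma>s n\<rfloor>" for n
  have kk: "1 \<le> kk n \<and> kk n \<le> n" if "1 \<le> n" for n
    using order_index_bounds[OF gs01 that] by (simp add: kk_def)
  obtain K where "\<forall>\<^sub>F n in sequentially. \<bar>real (kk n - 1) - \<gamma> * real (n - 1)\<bar> \<le> K"
    using eventually_order_index_near[OF gs01 gsO] by (auto simp: kk_def)
  note bound = eps_W2_os_le_geometric[OF _ _ kk this]
  obtain C where C: "\<And>n. 1 \<le> n \<Longrightarrow> eps_W2 (os_cdf FX n (kk n)) (os_cdf FY n (kk n))
      \<le> C * z_rate FX FY \<gamma> (eps0 / 2) ^ (n - 1)"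
    using bound[of "eps0 / 2"] eps0_pos by auto
  have "(\<lambda>n. eps_W2 (os_cdf FX n (kk n)) (os_cdf FY n (kk n))) \<longlonglongrightarrow> 0"
    using C kk eps_W2_os_cdf_nonneg eps0_pos z_rate_nonneg[of "eps0 / 2"] z_rate_less_1[of "eps0 / 2"]
    by (intro tendsto_0_if_le_geometric[of _ C "z_rate FX FY \<gamma> (eps0 / 2)"]) auto
  then show ?thesis
    using eps0_pos z_rate_nonneg z_rate_less_1 bound unfolding d_ast_le_def kk_def by blast
qed

end
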